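(* Let $1 \leq p < \infty$, and for each real $\mu > 1$ let $B_{\mathbf{w}_\mu} : \ell_p \to \ell_p$ be the unilateral weighted backward shift with weight sequence $\mathbf{w}_\mu = (1 + \frac{\mu}{n})_{n \geq 1}$, i.e. $B_{\mathbf{w}_\mu}(x_1,x_2,\dots) = \big((1+\mu)x_2, (1+\tfrac{\mu}{2})x_3, (1+\tfrac{\mu}{3})x_4,\dots\big)$. Then there exists a closed infinite-dimensional subspace $M$ of $\ell_p$ such that every nonzero vector of $M$ is $\mathscr{U}$-frequently hypercyclic for $B_{\mathbf{w}_\mu}$ for every $\mu > 1$, and no vector of $M$ is frequently hypercyclic for $B_{\mathbf{w}_\mu}$ for any $\mu > 1$.
   Context: For $A \subset \mathbb{N}_0 = \{0,1,2,\dots\}$, $\underline{\mathrm{d}}(A) = \liminf_{N\to\infty} \frac{|A \cap \{0,\dots,N\}|}{N+1}$ and $\overline{\mathrm{d}}(A) = \limsup_{N\to\infty} \frac{|A \cap \{0,\dots,N\}|}{N+1}$. For a bounded linear operator $T$ on a Banach space $X$ and $x \in X$, $E \subset X$, let $\mathcal{N}_T(x,E) = \{n \in \mathbb{N}_0 : T^n x \in E\}$. A vector $x$ is frequently hypercyclic (resp. $\mathscr{U}$-frequently hypercyclic) for $T$ if $\underline{\mathrm{d}}(\mathcal{N}_T(x,U)) > 0$ (resp. $\overline{\mathrm{d}}(\mathcal{N}_T(x,U)) > 0$) for every non-empty open $U \subset X$. The scalar field is $\mathbb{R}$ or $\mathbb{C}$. *)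

theory Defs
  imports "HOL-Analysis.Analysis" "HOL-Library.Liminf_Limsup"
begin

text \<open>Sequences are indexed from 0: x 0 is the paper's x_1. Scalars range over a
complete normed field (in practice the real or complex numbers).\<close>

definition lp :: "real \<Rightarrow> (nat \<Rightarrow> 'a::real_normed_field) set" where
  "lp p = {x. summable (\<lambda>n. norm (x n) powr p)}"

definition lp_norm :: "real \<Rightarrow> (nat \<Rightarrow> 'a::real_normed_field) \<Rightarrow> real" where
  "lp_norm p x = (\<Sum>n. norm (x n) powr p) powr (1 / p)"

definition lp_open :: "real \<Rightarrow> (nat \<Rightarrow> 'a::real_normed_field) set \<Rightarrow> bool" where
  "lp_open p U \<longleftrightarrow> U \<subseteq> lp p \<and>
     (\<forall>x\<in>U. \<exists>e>0. \<forall>y\<in>lp p. lp_norm p (\<lambda>n. y n - x n) < e \<longrightarrow> y \<in> U)"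

definition lp_closed :: "real \<Rightarrow> (nat \<Rightarrow> 'a::real_normed_field) set \<Rightarrow> bool" where
  "lp_closed p M \<longleftrightarrow> M \<subseteq> lp p \<and> lp_open p (lp p - M)"

definition seq_subspace :: "(nat \<Rightarrow> 'a::real_normed_field) set \<Rightarrow> bool" where
  "seq_subspace M \<longleftrightarrow> (\<lambda>n. 0) \<in> M \<and> (\<forall>x\<in>M. \<forall>y\<in>M. (\<lambda>n. x n + y n) \<in> M) \<and>
     (\<forall>c. \<forall>x\<in>M. (\<lambda>n. c * x n) \<in> M)"

definition seq_lin_indep :: "nat \<Rightarrow> (nat \<Rightarrow> nat \<Rightarrow> 'a::real_normed_field) \<Rightarrow> bool" where
  "seq_lin_indep k v \<longleftrightarrow>
     (\<forall>c::nat \<Rightarrow> 'a. (\<lambda>n. \<Sum>i<k. c i * v i n) = (\<lambda>n. 0) \<longrightarrow> (\<forall>i<k. c i = 0))"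

definition infinite_dim :: "(nat \<Rightarrow> 'a::real_normed_field) set \<Rightarrow> bool" where
  "infinite_dim M \<longleftrightarrow> (\<forall>k. \<exists>v. (\<forall>i<k. v i \<in> M) \<and> seq_lin_indep k v)"

definition lower_density :: "nat set \<Rightarrow> ereal" where
  "lower_density A = liminf (\<lambda>N. ereal (real (card (A \<inter> {0..N})) / real (N + 1)))"

definition upper_density :: "nat set \<Rightarrow> ereal" where
  "upper_density A = limsup (\<lambda>N. ereal (real (card (A \<inter> {0..N})) / real (N + 1)))"

definition visits :: "('b \<Rightarrow> 'b) \<Rightarrow> 'b \<Rightarrow> 'b set \<Rightarrow> nat set" where
  "visits T x E = {n. (T ^^ n) x \<in> E}"

definition freq_hypercyclic_lp ::
  "real \<Rightarrow> ((nat \<Rightarrow> 'a::real_normed_field) \<Rightarrow> (nat \<Rightarrow> 'a)) \<Rightarrow> (nat \<Rightarrow> 'a) \<Rightarrow> bool" where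
  "freq_hypercyclic_lp p T x \<longleftrightarrow> x \<in> lp p \<and>
     (\<forall>U. lp_open p U \<and> U \<noteq> {} \<longrightarrow> lower_density (visits T x U) > 0)"

definition U_freq_hypercyclic_lp ::
  "real \<Rightarrow> ((nat \<Rightarrow> 'a::real_normed_field) \<Rightarrow> (nat \<Rightarrow> 'a)) \<Rightarrow> (nat \<Rightarrow> 'a) \<Rightarrow> bool" where
  "U_freq_hypercyclic_lp p T x \<longleftrightarrow> x \<in> lp p \<and>
     (\<forall>U. lp_open p U \<and> U \<noteq> {} \<longrightarrow> upper_density (visits T x U) > 0)"

text \<open>Unilateral weighted backward shift with weights w_n = 1 + mu/n (n >= 1),
  with 0-based indexing: (B x)_n = w_(n+1) x_(n+1).\<close>
definition bws :: "real \<Rightarrow> (nat \<Rightarrow> 'a::real_normed_field) \<Rightarrow> nat \<Rightarrow> 'a" where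
  "bws \<mu> x n = of_real (1 + \<mu> / real (n + 1)) * x (Suc n)"

end

theory Submission
  imports Defs "HOL-Computational_Algebra.Fundamental_Theorem_Algebra"
begin

text \<open>By Ostrowski's argument a real normed field is spanned over the reals by \<open>1\<close> and one
  further element, so \<open>\<ell>\<^sub>p\<close> has a countable dense set of finitely supported patterns. The
  weight of \<open>B\<^sub>\<mu>\<^sup>n\<close> at position \<open>k\<close> is the product of the factors \<open>1 + \<mu>/i\<close> for
  \<open>k < i \<le> k + n\<close>, which is of the order \<open>((k + n)/k)^\<mu>\<close>.

  A single seed vector \<open>u\<close> is built in stages. Stage \<open>s\<close> carries a class, a pattern \<open>y\<close>, a
  tolerance \<open>\<epsilon>\<close> and a range \<open>[1 + \<delta>, q + 2]\<close> of parameters, and is cut into dyadic regions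
  \<open>[b, 2b)\<close>, each serving a short interval of parameters. In a region, copies of \<open>y\<close> divided
  by the weights of \<open>B\<^sup>n\<close> at the region's parameter are placed with a large period \<open>L\<close>, so
  that \<open>B\<^sub>\<mu>\<^sup>n u\<close> is close to \<open>y\<close> at every copy start \<open>n\<close> for every \<open>\<mu>\<close> the region serves:
  moving the parameter within the region changes the weights only by a factor \<open>1 + \<epsilon>\<close>, and
  the tails behind the copies decay like \<open>k^-(1+\<delta>)\<close>. The copy starts make up a proportion
  \<open>1/(6L)\<close> of \<open>[0, 2b]\<close>, so the return times to every open set have positive upper density
  for every \<open>\<mu> > 1\<close>. Long gaps between the stages give the support of \<open>u\<close> lower density
  \<open>0\<close>, and it contains every return time to a neighbourhood of the first unit vector.

  The subspace \<open>M\<close> consists of the vectors that coincide on each class with a multiple of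
  \<open>u\<close>; since every class occurs in infinitely many stages, each nonzero vector of \<open>M\<close> behaves
  like \<open>u\<close> itself.\<close>

section \<open>Real normed fields are separable\<close>

definition rpoly :: "real poly \<Rightarrow> 'a::real_field \<Rightarrow> 'a" where
  "rpoly p x = poly (map_poly of_real p) x"

lemma rpoly_pCons [simp]: "rpoly (pCons c p) x = of_real c + x * rpoly p x"
  by (simp add: rpoly_def map_poly_pCons)

lemma rpoly_0 [simp]: "rpoly 0 x = 0"
  by (simp add: rpoly_def)

lemma rpoly_1 [simp]: "rpoly 1 x = 1"
  by (simp add: rpoly_def)

lemma rpoly_add: "rpoly (p + q) x = rpoly p x + rpoly q x"
  by (induction p q rule: poly_induct2) (simp_all add: algebra_simps)

lemma rpoly_smult: "rpoly (smult c p) x = of_real c * rpoly p x"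
  by (induction p) (simp_all add: algebra_simps)

lemma rpoly_mult: "rpoly (p * q) x = rpoly p x * rpoly q x"
  by (induction p) (simp_all add: rpoly_add rpoly_smult algebra_simps)

lemma rpoly_power: "rpoly (p ^ n) x = rpoly p x ^ n"
  by (induction n) (simp_all add: rpoly_mult)

lemma rpoly_of_real: "rpoly p (of_real y) = of_real (poly p y)"
  by (induction p) auto

lemma rpoly_quadratic: "rpoly [:x\<^sup>2 + c, -2 * x, 1:] a = (a - of_real x)\<^sup>2 + of_real c"
  by (simp add: power2_eq_square algebra_simps)

lemma real_poly_linear_or_quadratic_factor:
  fixes G :: "real poly"
  assumes "degree G \<ge> 1"
  obtains r H where "G = [:-r, 1:] * H"
  | x c H where "c \<ge> 0" "G = [:x\<^sup>2 + c, -2 * x, 1:] * H"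
proof -
  have "\<not> constant (poly (map_poly complex_of_real G))"
    using assms by (simp add: constant_degree degree_map_poly)
  then obtain z :: complex where "rpoly G z = 0"
    using fundamental_theorem_of_algebra by (auto simp: rpoly_def)
  show thesis
  proof (cases "Im z = 0")
    case True
    then have "z = of_real (Re z)" by (simp add: complex_eq_iff)
    with \<open>rpoly G z = 0\<close> have "poly G (Re z) = 0" by (metis rpoly_of_real of_real_eq_0_iff)
    then have "[:-Re z, 1:] dvd G" using poly_eq_0_iff_dvd by blast
    then show thesis using that(1) by (auto elim!: dvdE)
  next
    case False
    define Q where "Q = [:(Re z)\<^sup>2 + (Im z)\<^sup>2, -2 * Re z, 1:]"
    define R where "R = G mod Q"
    have Q0: "Q \<noteq> 0" and "degree Q = 2" by (simp_all add: Q_def)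
    have "rpoly Q z = 0"
      by (simp add: Q_def complex_eq_iff power2_eq_square algebra_simps)
    have GQ: "G = Q * (G div Q) + R" by (simp add: R_def)
    then have "rpoly R z = 0"
      using \<open>rpoly G z = 0\<close> \<open>rpoly Q z = 0\<close> by (metis rpoly_add rpoly_mult add_0 mult_zero_left)
    have "degree R < 2"
      using degree_mod_less[OF Q0, of G] \<open>degree Q = 2\<close> by (auto simp: R_def)
    then have R_lin: "R = [:coeff R 0, coeff R 1:]"
      by (intro poly_eqI) (auto simp: coeff_pCons coeff_eq_0 split: nat.split)
    with \<open>rpoly R z = 0\<close> have "of_real (coeff R 0) + z * of_real (coeff R 1) = 0"
      by (metis rpoly_pCons rpoly_0 mult_zero_right add_0_right)
    then have "coeff R 1 = 0" "coeff R 0 = 0"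
      using False by (auto simp: complex_eq_iff)
    with R_lin GQ have "G = Q * (G div Q)" by simp
    then show thesis using that(2)[of "(Im z)\<^sup>2"] by (simp add: Q_def)
  qed
qed

lemma norm_rpoly_monic_ge:
  fixes a :: "'a::real_normed_field"
  assumes "m \<ge> 0"
    and m_le: "\<And>x c. c \<ge> 0 \<Longrightarrow> m \<le> norm ((a - of_real x)\<^sup>2 + of_real c)"
  shows "lead_coeff G = 1 \<Longrightarrow> sqrt m ^ degree G \<le> norm (rpoly G a)"
proof (induction "degree G" arbitrary: G rule: less_induct)
  case less
  have factor: "sqrt m ^ degree G \<le> norm (rpoly G a)"
    if G: "G = F * H" and F: "lead_coeff F = 1" "degree F > 0" "sqrt m ^ degree F \<le> norm (rpoly F a)"
    for F H
  proof -
    have "F \<noteq> 0" "H \<noteq> 0" using G F less.prems by auto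
    then have deg: "degree G = degree F + degree H" by (simp add: G degree_mult_eq)
    have "lead_coeff H = 1" using G F less.prems by (simp add: lead_coeff_mult)
    then have "sqrt m ^ degree H \<le> norm (rpoly H a)" using less.hyps deg F(2) by simp
    with F(3) have "sqrt m ^ degree F * sqrt m ^ degree H \<le> norm (rpoly F a) * norm (rpoly H a)"
      using \<open>m \<ge> 0\<close> by (intro mult_mono) auto
    then have "sqrt m ^ degree G \<le> norm (rpoly F a) * norm (rpoly H a)" by (simp add: deg power_add)
    then show ?thesis by (simp add: G rpoly_mult norm_mult)
  qed
  show ?case
  proof (cases "degree G = 0")
    case True
    with less.prems have "G = 1" by (metis degree_eq_zeroE lead_coeff_pCons(2) pCons_0_0 one_pCons)
    then show ?thesis by simp
  next
    case False
    then have "degree G \<ge> 1" by simp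
    then show ?thesis
    proof (cases rule: real_poly_linear_or_quadratic_factor)
      case (1 r H)
      have "m \<le> norm ((a - of_real r)\<^sup>2 + of_real 0)" by (rule m_le) simp
      then have "sqrt m \<le> norm (a - of_real r)" by (simp add: norm_power real_le_lsqrt)
      then show ?thesis by (intro factor[OF 1]) simp_all
    next
      case (2 x c H)
      have "sqrt m ^ degree [:x\<^sup>2 + c, -2 * x, 1:] \<le> norm (rpoly [:x\<^sup>2 + c, -2 * x, 1:] a)"
        using m_le[OF 2(1), of x] \<open>m \<ge> 0\<close> by (simp only: rpoly_quadratic) simp
      then show ?thesis by (rule factor[OF 2(2), rotated 2]) simp_all
    qed
  qed
qed

lemma odd_power_plus_const_factor:
  fixes P :: "real poly"
  assumes "odd n" "lead_coeff P = 1" "degree P > 0"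
  obtains H where "P ^ n + [:\<epsilon> ^ n:] = (P + [:\<epsilon>:]) * H" "lead_coeff H = 1"
    "degree H = degree P * (n - 1)"
proof -
  define H where "H = (\<Sum>i<n. [:-\<epsilon>:] ^ (n - Suc i) * P ^ i)"
  have "n \<ge> 1" using \<open>odd n\<close> by (cases n) auto
  have "P ^ n - [:-\<epsilon>:] ^ n = (P - [:-\<epsilon>:]) * H"
    unfolding H_def by (rule power_diff_sumr2)
  moreover have "[:-\<epsilon>:] ^ n = - [:\<epsilon> ^ n:]" using \<open>odd n\<close> by (simp add: poly_const_pow)
  moreover have "P - [:-\<epsilon>:] = P + [:\<epsilon>:]" by simp
  ultimately have factor: "P ^ n + [:\<epsilon> ^ n:] = (P + [:\<epsilon>:]) * H" by (metis diff_minus_eq_add)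
  have "P \<noteq> 0" using assms(2) by auto
  then have deg_pow: "degree (P ^ n) = degree P * n" by (simp add: degree_power_eq)
  then have deg: "degree (P ^ n + [:\<epsilon> ^ n:]) = degree P * n"
    using \<open>n \<ge> 1\<close> assms(3) by (subst degree_add_eq_left) auto
  have "lead_coeff (P ^ n + [:\<epsilon> ^ n:]) = coeff (P ^ n) (degree P * n) + coeff [:\<epsilon> ^ n:] (degree P * n)"
    by (simp add: deg)
  also have "coeff (P ^ n) (degree P * n) = 1"
    using deg_pow lead_coeff_power[of P n] assms(2) by simp
  also have "coeff [:\<epsilon> ^ n:] (degree P * n) = 0"
    using \<open>n \<ge> 1\<close> assms(3) by (simp add: coeff_pCons split: nat.split)
  finally have "lead_coeff (P ^ n + [:\<epsilon> ^ n:]) = 1" by simp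
  moreover have "degree (P + [:\<epsilon>:]) = degree P"
    using assms(3) by (simp add: degree_add_eq_left)
  moreover have "lead_coeff (P + [:\<epsilon>:]) = 1"
    using assms(2,3) \<open>degree (P + [:\<epsilon>:]) = degree P\<close> by (simp add: coeff_pCons split: nat.split)
  ultimately have "lead_coeff H = 1" "H \<noteq> 0"
    by (simp_all only: factor lead_coeff_mult) auto
  moreover have "P + [:\<epsilon>:] \<noteq> 0" using \<open>degree (P + [:\<epsilon>:]) = degree P\<close> assms(3) by auto
  ultimately have "degree P * n = degree P + degree H"
    using deg factor degree_mult_eq[of "P + [:\<epsilon>:]" H] \<open>degree (P + [:\<epsilon>:]) = degree P\<close> by simp
  then have "degree H = degree P * (n - 1)" by (simp add: diff_mult_distrib2)
  with factor \<open>lead_coeff H = 1\<close> show thesis by (rule that)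
qed

text \<open>Ostrowski's argument: with \<open>P(a) = (a - x\<^sub>0)\<^sup>2 + c\<close> and odd \<open>n\<close>, the factor \<open>H\<close> of
  \<open>P(a)\<^sup>n + \<epsilon>\<^sup>n = (P(a) + \<epsilon>) H(a)\<close> is a monic real polynomial of degree \<open>2n - 2\<close> in \<open>a\<close>,
  so its norm is at least \<open>m^(n - 1)\<close>.\<close>

lemma norm_quadratic_shift_le:
  fixes a :: "'a::real_normed_field"
  assumes "m > 0"
    and m_le: "\<And>x c. c \<ge> 0 \<Longrightarrow> m \<le> norm ((a - of_real x)\<^sup>2 + of_real c)"
    and Pc: "norm ((a - of_real x0)\<^sup>2 + of_real c) = m" and "odd n"
  shows "norm ((a - of_real x0)\<^sup>2 + of_real (c + m/2)) \<le> m + m * (1/2) ^ n"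
proof -
  define \<epsilon> where "\<epsilon> = m/2"
  define P where "P = [:x0\<^sup>2 + c, -2 * x0, 1:]"
  have "n \<ge> 1" using \<open>odd n\<close> by (cases n) auto
  have "lead_coeff P = 1" "degree P = 2" by (simp_all add: P_def)
  then obtain H where factor: "P ^ n + [:\<epsilon> ^ n:] = (P + [:\<epsilon>:]) * H"
    and "lead_coeff H = 1" "degree H = 2 * (n - 1)"
    using odd_power_plus_const_factor[OF \<open>odd n\<close> \<open>lead_coeff P = 1\<close>, of \<epsilon>] by auto
  then have "m ^ (n - 1) \<le> norm (rpoly H a)"
    using norm_rpoly_monic_ge[OF _ m_le \<open>lead_coeff H = 1\<close>] \<open>m > 0\<close> by (simp add: power_mult)
  have "norm (rpoly (P + [:\<epsilon>:]) a) * norm (rpoly H a) = norm (rpoly P a ^ n + of_real (\<epsilon> ^ n))"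
    by (metis factor norm_mult rpoly_mult rpoly_add rpoly_power rpoly_pCons rpoly_0 mult_zero_right add_0_right)
  also have "\<dots> \<le> norm (rpoly P a) ^ n + \<epsilon> ^ n"
    using norm_triangle_ineq[of "rpoly P a ^ n" "of_real (\<epsilon> ^ n)"] \<open>m > 0\<close>
    by (simp add: norm_power \<epsilon>_def del: of_real_power)
  also have "norm (rpoly P a) = m" using Pc by (simp only: P_def rpoly_quadratic)
  also have "m ^ n + \<epsilon> ^ n = m ^ (n - 1) * (m + m * (1/2) ^ n)"
    using \<open>n \<ge> 1\<close> by (simp add: \<epsilon>_def power_divide algebra_simps flip: power_Suc)
  finally have "norm (rpoly (P + [:\<epsilon>:]) a) * m ^ (n - 1) \<le> (m + m * (1/2) ^ n) * m ^ (n - 1)"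
    using \<open>m ^ (n - 1) \<le> norm (rpoly H a)\<close>
    by (smt (verit, best) mult.commute mult_left_mono norm_ge_zero)
  then have "norm (rpoly (P + [:\<epsilon>:]) a) \<le> m + m * (1/2) ^ n" using \<open>m > 0\<close> by simp
  moreover have "P + [:\<epsilon>:] = [:x0\<^sup>2 + (c + m/2), -2 * x0, 1:]" by (simp add: P_def \<epsilon>_def)
  ultimately show ?thesis by (simp only: rpoly_quadratic)
qed

lemma norm_quadratic_shift_ge:
  fixes a :: "'a::real_normed_field"
  shows "x\<^sup>2 + c - norm a * (2 * \<bar>x\<bar> + norm a) \<le> norm ((a - of_real x)\<^sup>2 + of_real c)"
proof -
  define y where "y = a * (of_real (2 * x) - a)"
  have eq: "(a - of_real x)\<^sup>2 + of_real c = of_real (x\<^sup>2 + c) - y"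
    by (simp add: y_def power2_eq_square algebra_simps)
  have "norm y \<le> norm a * (2 * \<bar>x\<bar> + norm a)"
    using norm_triangle_ineq4[of "of_real (2 * x)" a] by (simp add: y_def norm_mult mult_left_mono)
  moreover have "x\<^sup>2 + c \<le> norm (of_real (x\<^sup>2 + c) :: 'a)" by (simp only: norm_of_real abs_ge_self)
  ultimately show ?thesis
    unfolding eq using norm_triangle_ineq2[of "of_real (x\<^sup>2 + c) :: 'a" y] by linarith
qed

lemma norm_quadratic_shift_gt_far:
  fixes a :: "'a::real_normed_field"
  assumes "3 * norm a + 1 < norm (x, v)"
  shows "(norm a)\<^sup>2 < norm ((a - of_real x)\<^sup>2 + of_real (v\<^sup>2))"
proof -
  define A where "A = norm a"
  define \<rho> where "\<rho> = norm (x, v)"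
  have "A \<ge> 0" "\<rho>\<^sup>2 = x\<^sup>2 + v\<^sup>2" "\<bar>x\<bar> \<le> \<rho>"
    using norm_fst_le[of x v] by (simp_all add: A_def \<rho>_def norm_prod_def)
  have "(2 * A + 1)\<^sup>2 < (\<rho> - A)\<^sup>2"
    using assms \<open>A \<ge> 0\<close> by (intro power_strict_mono) (auto simp: A_def \<rho>_def)
  moreover have "(2 * A + 1)\<^sup>2 = 4 * A\<^sup>2 + 4 * A + 1" "(\<rho> - A)\<^sup>2 = \<rho>\<^sup>2 - 2 * (A * \<rho>) + A\<^sup>2"
    "A * (2 * \<rho> + A) = 2 * (A * \<rho>) + A\<^sup>2"
    by (simp_all add: power2_eq_square algebra_simps)
  ultimately have "A\<^sup>2 < \<rho>\<^sup>2 - A * (2 * \<rho> + A)" using \<open>A \<ge> 0\<close> zero_le_power2[of A] by linarith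
  also have "\<dots> \<le> x\<^sup>2 + v\<^sup>2 - A * (2 * \<bar>x\<bar> + A)"
    using \<open>\<bar>x\<bar> \<le> \<rho>\<close> \<open>A \<ge> 0\<close> \<open>\<rho>\<^sup>2 = x\<^sup>2 + v\<^sup>2\<close> by (simp add: mult_left_mono)
  also have "\<dots> \<le> norm ((a - of_real x)\<^sup>2 + of_real (v\<^sup>2))"
    using norm_quadratic_shift_ge[of x "v\<^sup>2" a] by (simp add: A_def)
  finally show ?thesis by (simp add: A_def)
qed

lemma quadratic_shift_attains_min:
  fixes a :: "'a::real_normed_field"
  obtains x0 c0 where "c0 \<ge> 0"
    "\<And>x c. c \<ge> 0 \<Longrightarrow> norm ((a - of_real x0)\<^sup>2 + of_real c0) \<le> norm ((a - of_real x)\<^sup>2 + of_real c)"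
proof -
  define R where "R = 3 * norm a + 1"
  define f where "f z = norm ((a - of_real (fst z))\<^sup>2 + of_real ((snd z)\<^sup>2))" for z :: "real \<times> real"
  have cont: "continuous_on (cball 0 R) f" unfolding f_def by (intro continuous_intros)
  have "R > 0" unfolding R_def by (simp add: add_nonneg_pos)
  then have "cball (0 :: real \<times> real) R \<noteq> {}" by simp
  then obtain z0 where z0: "z0 \<in> cball 0 R" "\<And>z. z \<in> cball 0 R \<Longrightarrow> f z0 \<le> f z"
    using continuous_attains_inf[OF compact_cball _ cont] by auto
  have min: "f z0 \<le> f (x, v)" for x v
  proof (cases "(x, v) \<in> cball 0 R")
    case False
    then have "f 0 < f (x, v)"
      using norm_quadratic_shift_gt_far[of a x v] by (simp add: f_def R_def norm_power)
    moreover have "f z0 \<le> f 0" using z0 \<open>R > 0\<close> by simp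
    ultimately show ?thesis by simp
  qed (use z0 in blast)
  show thesis
  proof (rule that[of "(snd z0)\<^sup>2" "fst z0"])
    fix x c :: real
    assume "c \<ge> 0"
    then have "f (x, sqrt c) = norm ((a - of_real x)\<^sup>2 + of_real c)" by (simp add: f_def)
    with min[of x "sqrt c"]
    show "norm ((a - of_real (fst z0))\<^sup>2 + of_real ((snd z0)\<^sup>2)) \<le> norm ((a - of_real x)\<^sup>2 + of_real c)"
      by (simp add: f_def)
  qed simp
qed

lemma quadratic_shift_min_stable:
  fixes a :: "'a::real_normed_field"
  assumes "m > 0"
    and m_le: "\<And>x c. c \<ge> 0 \<Longrightarrow> m \<le> norm ((a - of_real x)\<^sup>2 + of_real c)"
    and "c \<ge> 0" and c: "norm ((a - of_real x0)\<^sup>2 + of_real c) = m"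
  shows "norm ((a - of_real x0)\<^sup>2 + of_real (c + m/2)) = m"
proof (rule antisym)
  define N where "N = norm ((a - of_real x0)\<^sup>2 + of_real (c + m/2))"
  show "N \<le> m"
  proof (rule ccontr)
    assume "\<not> N \<le> m"
    then have "(N - m) / m > 0" using \<open>m > 0\<close> by simp
    then obtain n where "(1/2::real) ^ n < (N - m) / m"
      using real_arch_pow_inv[of "(N - m) / m" "1/2"] by auto
    moreover have "(1/2::real) ^ (2 * n + 1) \<le> (1/2) ^ n" by (rule power_decreasing) auto
    ultimately have "(1/2::real) ^ (2 * n + 1) < (N - m) / m" by linarith
    then have "(1/2::real) ^ (2 * n + 1) * m < N - m" using pos_less_divide_eq[OF \<open>m > 0\<close>] by blast
    moreover have "N \<le> m + m * (1/2) ^ (2 * n + 1)"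
      unfolding N_def by (rule norm_quadratic_shift_le[OF \<open>m > 0\<close> m_le c]) auto
    ultimately show False by (simp add: mult.commute)
  qed
  show "m \<le> N" unfolding N_def using \<open>c \<ge> 0\<close> \<open>m > 0\<close> by (intro m_le) simp
qed

text \<open>The minimum \<open>m\<close> of \<open>\<parallel>(a - x)\<^sup>2 + c\<parallel>\<close> over \<open>c \<ge> 0\<close> must vanish: otherwise it would be
  attained at \<open>c\<^sub>0 + k m/2\<close> for every \<open>k\<close>, although the norm grows like \<open>c\<close>.\<close>

lemma real_normed_field_quadratic_root:
  fixes a :: "'a::real_normed_field"
  obtains x c where "c \<ge> 0" "(a - of_real x)\<^sup>2 = - of_real c"
proof -
  obtain x0 c0 where "c0 \<ge> 0"
    and min: "\<And>x c. c \<ge> 0 \<Longrightarrow> norm ((a - of_real x0)\<^sup>2 + of_real c0) \<le> norm ((a - of_real x)\<^sup>2 + of_real c)"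
    by (rule quadratic_shift_attains_min[of a]) blast
  define m where "m = norm ((a - of_real x0)\<^sup>2 + of_real c0)"
  have m_le: "\<And>x c. c \<ge> 0 \<Longrightarrow> m \<le> norm ((a - of_real x)\<^sup>2 + of_real c)"
    using min by (simp add: m_def)
  show thesis
  proof (cases "m = 0")
    case True
    then show thesis using that[OF \<open>c0 \<ge> 0\<close>, of x0] by (simp add: m_def eq_neg_iff_add_eq_0)
  next
    case False
    then have "m > 0" by (simp add: m_def)
    have iter: "norm ((a - of_real x0)\<^sup>2 + of_real (c0 + real k * (m/2))) = m" for k
    proof (induction k)
      case (Suc k)
      have "c0 + real k * (m/2) \<ge> 0" using \<open>c0 \<ge> 0\<close> \<open>m > 0\<close> by simp
      moreover have "c0 + real k * (m/2) + m/2 = c0 + real (Suc k) * (m/2)" by (simp add: algebra_simps)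
      ultimately show ?case using quadratic_shift_min_stable[OF \<open>m > 0\<close> m_le] Suc by metis
    qed (simp add: m_def)
    have "m/2 > 0" using \<open>m > 0\<close> by simp
    then obtain k :: nat where k: "m + norm a * (2 * \<bar>x0\<bar> + norm a) < real k * (m/2)"
      using reals_Archimedean3 by blast
    have "x0\<^sup>2 + (c0 + real k * (m/2)) - norm a * (2 * \<bar>x0\<bar> + norm a) \<le> m"
      using norm_quadratic_shift_ge[of x0 "c0 + real k * (m/2)" a] iter[of k] by simp
    with k \<open>c0 \<ge> 0\<close> zero_le_power2[of x0] show thesis by linarith
  qed
qed

lemma real_normed_field_span_two:
  obtains j :: "'a::real_normed_field" where "\<And>b. \<exists>\<alpha> \<beta>. b = of_real \<alpha> + of_real \<beta> * j"
proof (cases "\<forall>a::'a. a \<in> range of_real")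
  case True
  then show thesis by (intro that[of 0]) auto
next
  case False
  then obtain a :: 'a where a: "a \<notin> range of_real" by blast
  obtain x c where "c \<ge> 0" and xc: "(a - of_real x)\<^sup>2 = - of_real c"
    by (rule real_normed_field_quadratic_root)
  have "c \<noteq> 0"
  proof
    assume "c = 0"
    with xc have "a = of_real x" by simp
    with a show False by blast
  qed
  define j where "j = (a - of_real x) / of_real (sqrt c)"
  have j2: "j\<^sup>2 = -1"
    using xc \<open>c \<ge> 0\<close> \<open>c \<noteq> 0\<close> by (simp add: j_def power_divide flip: of_real_power)
  show thesis
  proof (rule that[of j])
    fix b :: 'a
    obtain y d where "d \<ge> 0" and yd: "(b - of_real y)\<^sup>2 = - of_real d"
      by (rule real_normed_field_quadratic_root)
    then have "(b - of_real y)\<^sup>2 = (of_real (sqrt d) * j)\<^sup>2"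
      by (simp add: power_mult_distrib j2 flip: of_real_power)
    then have "b - of_real y = of_real (sqrt d) * j \<or> b - of_real y = of_real (- sqrt d) * j"
      by (simp only: power2_eq_iff of_real_minus mult_minus_left)
    then show "\<exists>\<alpha> \<beta>. b = of_real \<alpha> + of_real \<beta> * j"
      by (metis add.commute diff_add_cancel)
  qed
qed

lemma real_normed_field_separable:
  obtains D :: "'a::real_normed_field set"
  where "countable D" "0 \<in> D" "1 \<in> D" "\<And>a e. e > 0 \<Longrightarrow> \<exists>d\<in>D. norm (a - d) < e"
proof -
  obtain j :: 'a where span: "\<And>b. \<exists>\<alpha> \<beta>. b = of_real \<alpha> + of_real \<beta> * j"
    by (rule real_normed_field_span_two) blast
  define D where "D = (\<lambda>(q1, q2). of_real q1 + of_real q2 * j) ` (\<rat> \<times> \<rat>)"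
  have approx: "\<exists>q\<in>\<rat>. \<bar>t - q\<bar> < \<delta>" if "\<delta> > 0" for t \<delta> :: real
  proof -
    obtain q where "q \<in> \<rat>" "t - \<delta> < q" "q < t" using Rats_dense_in_real[of "t - \<delta>" t] \<open>\<delta> > 0\<close> by auto
    then show ?thesis by (intro bexI[of _ q]) auto
  qed
  show thesis
  proof (rule that)
    show "countable D" by (simp add: D_def countable_rat)
    show "0 \<in> D" "1 \<in> D" unfolding D_def
      by (force intro!: image_eqI[of _ _ "(0, 0)"], force intro!: image_eqI[of _ _ "(1, 0)"])
    fix a :: 'a and e :: real
    assume "e > 0"
    obtain \<alpha> \<beta> where a: "a = of_real \<alpha> + of_real \<beta> * j" using span by blast
    obtain q1 where "q1 \<in> \<rat>" "\<bar>\<alpha> - q1\<bar> < e/2" using approx[of "e/2"] \<open>e > 0\<close> by auto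
    obtain q2 where "q2 \<in> \<rat>" "\<bar>\<beta> - q2\<bar> < e / (2 * (norm j + 1))"
      using approx[of "e / (2 * (norm j + 1))"] \<open>e > 0\<close> by (auto simp: add_nonneg_pos)
    have "norm j + 1 > 0" by (simp add: add_nonneg_pos)
    have "\<bar>\<beta> - q2\<bar> * norm j \<le> \<bar>\<beta> - q2\<bar> * (norm j + 1)" by (simp add: mult_left_mono)
    also have "\<dots> \<le> e / (2 * (norm j + 1)) * (norm j + 1)"
      using \<open>\<bar>\<beta> - q2\<bar> < e / (2 * (norm j + 1))\<close> by (intro mult_right_mono) auto
    also have "\<dots> = e/2" using \<open>norm j + 1 > 0\<close> by (simp add: field_simps)
    finally have "\<bar>\<beta> - q2\<bar> * norm j \<le> e/2" .
    have diff: "a - (of_real q1 + of_real q2 * j) = of_real (\<alpha> - q1) + of_real (\<beta> - q2) * j"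
      by (simp add: a algebra_simps)
    have "norm (a - (of_real q1 + of_real q2 * j)) \<le> \<bar>\<alpha> - q1\<bar> + \<bar>\<beta> - q2\<bar> * norm j"
      unfolding diff using norm_triangle_ineq[of "of_real (\<alpha> - q1) :: 'a" "of_real (\<beta> - q2) * j"]
      by (simp only: norm_mult norm_of_real)
    also have "\<dots> < e" using \<open>\<bar>\<alpha> - q1\<bar> < e/2\<close> \<open>\<bar>\<beta> - q2\<bar> * norm j \<le> e/2\<close> by simp
    finally show "\<exists>d\<in>D. norm (a - d) < e"
      using \<open>q1 \<in> \<rat>\<close> \<open>q2 \<in> \<rat>\<close> unfolding D_def
      by (intro bexI[of _ "of_real q1 + of_real q2 * j"] image_eqI[of _ _ "(q1, q2)"]) auto
  qed
qed

section \<open>The sequence spaces \<open>\<ell>\<^sub>p\<close>\<close>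

definition lp_sum :: "real \<Rightarrow> (nat \<Rightarrow> 'a::real_normed_vector) \<Rightarrow> real" where
  "lp_sum p x = (\<Sum>n. norm (x n) powr p)"

lemma lp_summable: "x \<in> lp p \<Longrightarrow> summable (\<lambda>n. norm (x n) powr p)"
  by (simp add: lp_def)

lemma lpI: "summable (\<lambda>n. norm (x n) powr p) \<Longrightarrow> x \<in> lp p"
  by (simp add: lp_def)

lemma lp_sum_nonneg: "x \<in> lp p \<Longrightarrow> lp_sum p x \<ge> 0"
  unfolding lp_sum_def by (intro suminf_nonneg lp_summable) auto

lemma lp_norm_less_iff:
  assumes "p > 0" "e > 0" "x \<in> lp p"
  shows "lp_norm p x < e \<longleftrightarrow> lp_sum p x < e powr p"
proof -
  have norm: "lp_norm p x = lp_sum p x powr (1/p)" by (simp add: lp_norm_def lp_sum_def)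
  have sum: "lp_sum p x = lp_norm p x powr p"
    using lp_sum_nonneg[OF assms(3)] assms(1) by (simp add: norm powr_powr)
  show ?thesis
  proof
    assume "lp_norm p x < e"
    then show "lp_sum p x < e powr p"
      unfolding sum using assms(1) by (intro powr_less_mono2) (auto simp: norm)
  next
    assume "lp_sum p x < e powr p"
    then have "lp_sum p x powr (1/p) < (e powr p) powr (1/p)"
      using assms lp_sum_nonneg[OF assms(3)] by (intro powr_less_mono2) auto
    then show "lp_norm p x < e" using assms by (simp add: norm powr_powr)
  qed
qed

lemma norm_le_lp_norm:
  assumes "x \<in> lp p" "p > 0"
  shows "norm (x n) \<le> lp_norm p x"
proof -
  have "norm (x n) powr p \<le> lp_sum p x"
    unfolding lp_sum_def using sum_le_suminf[OF lp_summable[OF assms(1)], of "{n}"] by simp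
  then have "(norm (x n) powr p) powr (1/p) \<le> lp_sum p x powr (1/p)"
    using assms(2) by (intro powr_mono2) auto
  then show ?thesis using assms(2) by (simp add: lp_norm_def lp_sum_def powr_powr)
qed

lemma powr_add_le:
  fixes a b p :: real
  assumes "a \<ge> 0" "b \<ge> 0" "p \<ge> 0"
  shows "(a + b) powr p \<le> 2 powr p * (a powr p + b powr p)"
proof -
  have "(a + b) powr p \<le> (2 * max a b) powr p"
    using assms by (intro powr_mono2) auto
  also have "\<dots> = 2 powr p * max a b powr p" using assms by (simp add: powr_mult)
  also have "max a b powr p \<le> a powr p + b powr p"
    by (cases "a \<le> b") (auto simp: max_def)
  then have "2 powr p * max a b powr p \<le> 2 powr p * (a powr p + b powr p)"
    by (intro mult_left_mono) auto
  finally show ?thesis .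
qed

lemma powr_le_self: "p \<ge> 1 \<Longrightarrow> 0 \<le> x \<Longrightarrow> x \<le> (1::real) \<Longrightarrow> x powr p \<le> x"
  using powr_mono'[of 1 p x] by (cases "x = 0") auto

lemma norm_add_powr_le:
  fixes x y :: "'a::real_normed_vector"
  assumes "p \<ge> 0"
  shows "norm (x + y) powr p \<le> 2 powr p * (norm x powr p + norm y powr p)"
proof -
  have "norm (x + y) powr p \<le> (norm x + norm y) powr p"
    using assms by (intro powr_mono2 norm_triangle_ineq) auto
  also have "\<dots> \<le> 2 powr p * (norm x powr p + norm y powr p)"
    by (rule powr_add_le) (use assms in auto)
  finally show ?thesis .
qed

lemma lp_add:
  assumes "x \<in> lp p" "y \<in> lp p" "p \<ge> 0"
  shows "(\<lambda>n. x n + y n) \<in> lp p"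
proof (rule lpI, rule summable_comparison_test)
  show "\<exists>N. \<forall>n\<ge>N. norm (norm (x n + y n) powr p) \<le> 2 powr p * (norm (x n) powr p + norm (y n) powr p)"
    using norm_add_powr_le[OF assms(3)] by auto
  show "summable (\<lambda>n. 2 powr p * (norm (x n) powr p + norm (y n) powr p))"
    using lp_summable[OF assms(1)] lp_summable[OF assms(2)] by (intro summable_mult summable_add)
qed

lemma lp_sum_add_le:
  assumes "x \<in> lp p" "y \<in> lp p" "p \<ge> 0"
  shows "lp_sum p (\<lambda>n. x n + y n) \<le> 2 powr p * (lp_sum p x + lp_sum p y)"
proof -
  have sx: "summable (\<lambda>n. norm (x n) powr p)" and sy: "summable (\<lambda>n. norm (y n) powr p)"
    using assms by (auto intro: lp_summable)
  have "lp_sum p (\<lambda>n. x n + y n) \<le> (\<Sum>n. 2 powr p * (norm (x n) powr p + norm (y n) powr p))"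
    unfolding lp_sum_def
    by (intro suminf_le norm_add_powr_le assms lp_summable[OF lp_add[OF assms]] summable_mult
        summable_add sx sy)
  also have "\<dots> = 2 powr p * (lp_sum p x + lp_sum p y)"
    unfolding lp_sum_def by (simp add: suminf_mult suminf_add summable_add sx sy)
  finally show ?thesis .
qed

lemma lp_scale:
  fixes c :: "'a::real_normed_field"
  assumes "x \<in> lp p"
  shows "(\<lambda>n. c * x n) \<in> lp p"
  using summable_mult[OF lp_summable[OF assms], of "norm c powr p"]
  by (intro lpI) (simp add: norm_mult powr_mult)

lemma lp_sum_scale:
  fixes c :: "'a::real_normed_field"
  assumes "x \<in> lp p"
  shows "lp_sum p (\<lambda>n. c * x n) = norm c powr p * lp_sum p x"
  unfolding lp_sum_def using lp_summable[OF assms] by (simp add: norm_mult powr_mult suminf_mult)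

lemma lp_eventually_zero:
  assumes "\<And>k. k \<ge> J \<Longrightarrow> y k = 0" "p > 0"
  shows "y \<in> lp p"
proof (rule lpI, rule summable_comparison_test'[where g = "\<lambda>_. 0" and N = J])
  show "norm (norm (y n) powr p) \<le> 0" if "J \<le> n" for n using assms that by simp
qed simp

lemma lp_diff:
  assumes "x \<in> lp p" "y \<in> lp p" "p \<ge> 0"
  shows "(\<lambda>n. x n - y n) \<in> lp p"
proof -
  have "(\<lambda>n. - y n) \<in> lp p" using assms(2) by (simp add: lp_def)
  with lp_add[OF assms(1) this assms(3)] show ?thesis by simp
qed

lemma norm_diff_le_lp_norm:
  assumes "x \<in> lp p" "y \<in> lp p" "p > 0"
  shows "norm (x n - y n) \<le> lp_norm p (\<lambda>n. x n - y n)"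
  using norm_le_lp_norm[OF lp_diff[OF assms(1,2)]] assms(3) by simp

lemma lp_open_lp_sum_ball:
  assumes "lp_open p U" "x \<in> U" "p > 0"
  obtains e where "e > 0" "\<And>y. y \<in> lp p \<Longrightarrow> lp_sum p (\<lambda>n. y n - x n) < e \<Longrightarrow> y \<in> U"
proof -
  obtain e where e: "e > 0" "\<And>y. y \<in> lp p \<Longrightarrow> lp_norm p (\<lambda>n. y n - x n) < e \<Longrightarrow> y \<in> U"
    using assms unfolding lp_open_def by blast
  have "x \<in> lp p" using assms unfolding lp_open_def by blast
  show thesis
  proof (rule that[of "e powr p"])
    fix y assume "y \<in> lp p" "lp_sum p (\<lambda>n. y n - x n) < e powr p"
    with lp_diff[OF \<open>y \<in> lp p\<close> \<open>x \<in> lp p\<close>] assms(3) e show "y \<in> U"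
      by (simp add: lp_norm_less_iff)
  qed (use e in simp)
qed

lemma lp_open_Union: "(\<And>U. U \<in> F \<Longrightarrow> lp_open p U) \<Longrightarrow> lp_open p (\<Union>F)"
  unfolding lp_open_def by blast

lemma lp_open_coord_ball:
  assumes "p > 0"
  shows "lp_open p {y \<in> lp p. norm (y k - c) < r}"
  unfolding lp_open_def
proof (intro conjI ballI)
  fix x assume x: "x \<in> {y \<in> lp p. norm (y k - c) < r}"
  show "\<exists>e>0. \<forall>y\<in>lp p. lp_norm p (\<lambda>n. y n - x n) < e \<longrightarrow> y \<in> {y \<in> lp p. norm (y k - c) < r}"
  proof (intro exI[of _ "r - norm (x k - c)"] conjI ballI impI)
    fix y assume "y \<in> lp p" "lp_norm p (\<lambda>n. y n - x n) < r - norm (x k - c)"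
    moreover have "norm (y k - c) \<le> norm (y k - x k) + norm (x k - c)"
      using norm_triangle_ineq[of "y k - x k" "x k - c"] by simp
    ultimately show "y \<in> {y \<in> lp p. norm (y k - c) < r}"
      using norm_diff_le_lp_norm[of y p x k] x assms by force
  qed (use x in auto)
qed auto

lemma lp_open_coord_combination_nonzero:
  fixes a b :: "'a::real_normed_field"
  assumes "p > 0"
  shows "lp_open p {y \<in> lp p. a * y i + b * y j \<noteq> 0}"
  unfolding lp_open_def
proof (intro conjI ballI)
  fix z assume z: "z \<in> {y \<in> lp p. a * y i + b * y j \<noteq> 0}"
  define d where "d = norm (a * z i + b * z j)"
  define K where "K = norm a + norm b + 1"
  have "d > 0" using z by (simp add: d_def)
  have "K > 0" unfolding K_def by (smt (verit) norm_ge_zero)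
  show "\<exists>e>0. \<forall>y\<in>lp p. lp_norm p (\<lambda>n. y n - z n) < e \<longrightarrow> y \<in> {y \<in> lp p. a * y i + b * y j \<noteq> 0}"
  proof (intro exI[of _ "d / K"] conjI ballI impI)
    fix y assume y: "y \<in> lp p" "lp_norm p (\<lambda>n. y n - z n) < d / K"
    have "z \<in> lp p" using z by simp
    have "norm (y i - z i) < d / K" "norm (y j - z j) < d / K"
      using norm_diff_le_lp_norm[OF y(1) \<open>z \<in> lp p\<close> assms] y(2) by (meson order_le_less_trans)+
    then have "norm a * norm (y i - z i) + norm b * norm (y j - z j) \<le> norm a * (d / K) + norm b * (d / K)"
      by (intro add_mono mult_left_mono) auto
    also have "\<dots> = (norm a + norm b) * (d / K)" by (simp only: distrib_right)
    also have "\<dots> < d" using \<open>d > 0\<close> \<open>K > 0\<close> by (simp add: K_def field_simps)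
    finally have "norm ((a * y i + b * y j) - (a * z i + b * z j)) < d"
      by (smt (verit) norm_mult norm_triangle_ineq right_diff_distrib add_diff_add)
    moreover have "norm ((a * y i + b * y j) - (a * z i + b * z j)) = d" if "a * y i + b * y j = 0"
      by (simp only: that diff_0 norm_minus_cancel d_def)
    ultimately show "y \<in> {y \<in> lp p. a * y i + b * y j \<noteq> 0}" using y by auto
  qed (use \<open>d > 0\<close> \<open>K > 0\<close> in simp)
qed auto

lemma lp_tail_small:
  assumes "z \<in> lp p" "e > 0" "K > 0"
  obtains N where "\<And>n. N \<le> n \<Longrightarrow> K * (\<Sum>i. norm (z (i + n)) powr p) < e"
proof -
  obtain N where N: "\<And>n. N \<le> n \<Longrightarrow> norm (\<Sum>i. norm (z (i + n)) powr p) < e / K"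
    using suminf_exist_split[OF _ lp_summable[OF assms(1)], of "e / K"] assms(2,3) by auto
  show thesis
  proof (rule that)
    fix n assume "N \<le> n"
    then have "(\<Sum>i. norm (z (i + n)) powr p) < e / K" using N[of n] by (simp add: abs_less_iff)
    then show "K * (\<Sum>i. norm (z (i + n)) powr p) < e" using assms(3) by (simp add: pos_less_divide_eq mult.commute)
  qed
qed

definition finite_patterns :: "'a set \<Rightarrow> (nat \<Rightarrow> 'a::real_normed_field) set" where
  "finite_patterns D = {y. (\<forall>k. y k \<in> D) \<and> (\<exists>J. \<forall>k\<ge>J. y k = 0)}"

lemma countable_finite_patterns:
  assumes "countable D" "0 \<in> D"
  shows "countable (finite_patterns D)"
proof -
  let ?seq = "\<lambda>xs k. if k < length xs then xs ! k else 0"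
  have "finite_patterns D \<subseteq> ?seq ` lists D"
  proof
    fix y assume y: "y \<in> finite_patterns D"
    then obtain J where "\<forall>k\<ge>J. y k = 0" by (auto simp: finite_patterns_def)
    then have "y = ?seq (map y [0..<J])" by (auto simp: fun_eq_iff)
    moreover have "map y [0..<J] \<in> lists D" using y by (auto simp: finite_patterns_def)
    ultimately show "y \<in> ?seq ` lists D" by blast
  qed
  then show ?thesis using assms by (auto intro: countable_subset)
qed

lemma finite_patterns_dense:
  assumes "0 \<in> D" and dense: "\<And>a e. e > 0 \<Longrightarrow> \<exists>d\<in>D. norm (a - d) < e"
    and "x \<in> lp p" "p > 0" "\<epsilon> > 0"
  obtains y where "y \<in> finite_patterns D" "lp_sum p (\<lambda>k. y k - x k) < \<epsilon>"
proof -
  obtain J where J: "norm (\<Sum>i. norm (x (i + J)) powr p) < \<epsilon>/2"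
    using suminf_exist_split[OF _ lp_summable[OF assms(3)], of "\<epsilon>/2"] assms(5) by auto
  define r where "r = (\<epsilon> / (2 * (real J + 1))) powr (1/p)"
  have "r > 0" using assms(5) by (simp add: r_def)
  then have "\<forall>k. \<exists>d\<in>D. norm (x k - d) < r" using dense by blast
  then obtain d where d: "\<And>k. d k \<in> D" "\<And>k. norm (x k - d k) < r" by metis
  define y where "y k = (if k < J then d k else 0)" for k
  have "y \<in> finite_patterns D"
    unfolding finite_patterns_def y_def using d assms(1) by (auto intro!: exI[of _ J])
  have "y \<in> lp p" by (rule lp_eventually_zero[of J]) (use assms(4) in \<open>auto simp: y_def\<close>)
  then have "summable (\<lambda>k. norm (y k - x k) powr p)"
    using lp_summable[OF lp_diff[OF _ assms(3)]] assms(4) by simp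
  then have "lp_sum p (\<lambda>k. y k - x k) = (\<Sum>i. norm (y (i + J) - x (i + J)) powr p) + (\<Sum>k<J. norm (y k - x k) powr p)"
    unfolding lp_sum_def by (rule suminf_split_initial_segment)
  also have "(\<Sum>i. norm (y (i + J) - x (i + J)) powr p) < \<epsilon>/2"
    using J by (simp add: y_def)
  also have "(\<Sum>k<J. norm (y k - x k) powr p) \<le> (\<Sum>k<J. \<epsilon> / (2 * (real J + 1)))"
  proof (rule sum_mono)
    fix k assume "k \<in> {..<J}"
    then have "norm (y k - x k) powr p \<le> r powr p"
      using d(2)[of k] assms(4) by (intro powr_mono2) (auto simp: y_def norm_minus_commute)
    also have "r powr p = \<epsilon> / (2 * (real J + 1))" using assms(4,5) by (simp add: r_def powr_powr)
    finally show "norm (y k - x k) powr p \<le> \<epsilon> / (2 * (real J + 1))" .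
  qed
  also have "\<dots> \<le> \<epsilon>/2" using assms(5) by (simp add: field_simps)
  finally show thesis using that \<open>y \<in> finite_patterns D\<close> by simp
qed

definition pattern_length :: "(nat \<Rightarrow> 'a::zero) \<Rightarrow> nat" where
  "pattern_length y = (LEAST J. \<forall>k\<ge>J. y k = 0)"

lemma pattern_length_zero:
  assumes "y \<in> finite_patterns D" "k \<ge> pattern_length y"
  shows "y k = 0"
proof -
  have "\<exists>J. \<forall>k\<ge>J. y k = 0" using assms(1) by (auto simp: finite_patterns_def)
  from LeastI_ex[OF this] show ?thesis using assms(2) unfolding pattern_length_def by blast
qed

definition pattern_bound :: "(nat \<Rightarrow> 'a::real_normed_vector) \<Rightarrow> real" where
  "pattern_bound y = (\<Sum>k<pattern_length y. norm (y k)) + 1"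

lemma pattern_bound_ge_1: "pattern_bound y \<ge> 1"
  unfolding pattern_bound_def by (simp add: sum_nonneg)

lemma norm_le_pattern_bound:
  assumes "y \<in> finite_patterns D"
  shows "norm (y k) \<le> pattern_bound y"
proof (cases "k < pattern_length y")
  case True
  then have "norm (y k) \<le> (\<Sum>k<pattern_length y. norm (y k))" by (intro member_le_sum) auto
  then show ?thesis unfolding pattern_bound_def by simp
qed (use pattern_length_zero[OF assms] pattern_bound_ge_1[of y] in simp)

section \<open>Densities\<close>

lemma lower_density_le_0I:
  assumes "\<And>\<epsilon> N0. \<epsilon> > 0 \<Longrightarrow> \<exists>N\<ge>N0. real (card (A \<inter> {0..N})) / real (N + 1) < \<epsilon>"
  shows "lower_density A \<le> 0"
proof (rule ccontr)
  assume "\<not> lower_density A \<le> 0"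
  then obtain \<epsilon> where e: "0 < ereal \<epsilon>" "ereal \<epsilon> < lower_density A"
    using ereal_dense2 by (metis not_le)
  then have "eventually (\<lambda>N. ereal \<epsilon> < ereal (real (card (A \<inter> {0..N})) / real (N + 1))) sequentially"
    unfolding lower_density_def by (intro less_LiminfD) auto
  then obtain N0 where "\<And>N. N \<ge> N0 \<Longrightarrow> \<epsilon> < real (card (A \<inter> {0..N})) / real (N + 1)"
    by (auto simp: eventually_sequentially)
  with assms[of \<epsilon> N0] e(1) show False by force
qed

lemma upper_density_geI:
  assumes "\<And>N0. \<exists>N\<ge>N0. \<delta> \<le> real (card (A \<inter> {0..N})) / real (N + 1)"
  shows "ereal \<delta> \<le> upper_density A"
proof (rule ccontr)
  assume "\<not> ereal \<delta> \<le> upper_density A"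
  then have "eventually (\<lambda>N. ereal (real (card (A \<inter> {0..N})) / real (N + 1)) < ereal \<delta>) sequentially"
    unfolding upper_density_def by (intro Limsup_lessD) simp
  then obtain N0 where "\<And>N. N \<ge> N0 \<Longrightarrow> real (card (A \<inter> {0..N})) / real (N + 1) < \<delta>"
    by (auto simp: eventually_sequentially)
  with assms[of N0] show False by force
qed

lemma div_over_double_ge:
  fixes b L :: nat
  assumes "L \<ge> 1" "b \<ge> 8 * L"
  shows "1 / (6 * real L) \<le> real (b div L) / real (2 * b + 1)"
proof -
  have "b < b div L * L + L" using assms(1) mod_less_divisor[of L b] div_mult_mod_eq[of b L] by linarith
  then have "real b < real (b div L) * real L + real L" by (metis of_nat_add of_nat_less_iff of_nat_mult)
  moreover have "8 * real L \<le> real b" using assms(2) by (metis of_nat_le_iff of_nat_mult of_nat_numeral)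
  ultimately have h: "real b / 2 \<le> real (b div L) * real L" by linarith
  have "real L > 0" "real b > 0" using assms by auto
  have "1 / (6 * real L) = (real b / 2) / (real L * (3 * real b))"
    using \<open>real L > 0\<close> \<open>real b > 0\<close> by (simp add: field_simps)
  also have "\<dots> \<le> (real (b div L) * real L) / (real L * (3 * real b))"
    using h \<open>real L > 0\<close> \<open>real b > 0\<close> by (intro divide_right_mono) auto
  also have "\<dots> = real (b div L) / (3 * real b)" using \<open>real L > 0\<close> by simp
  also have "\<dots> \<le> real (b div L) / real (2 * b + 1)"
    using \<open>real b > 0\<close> assms by (intro divide_left_mono) auto
  finally show ?thesis .
qed

lemma upper_density_progressions_ge:
  assumes "L \<ge> 1"
    and progressions: "\<And>N. \<exists>b\<ge>N. 8 * L \<le> b \<and> (\<forall>i < b div L. b + i * L \<in> A)"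
  shows "ereal (1 / (6 * real L)) \<le> upper_density A"
proof (rule upper_density_geI)
  fix N0
  obtain b where b: "b \<ge> N0" "8 * L \<le> b" "\<And>i. i < b div L \<Longrightarrow> b + i * L \<in> A"
    using progressions by blast
  have "b + i * L \<le> 2 * b" if "i < b div L" for i
  proof -
    have "i * L \<le> b div L * L" using that by simp
    also have "\<dots> \<le> b" by simp
    finally show ?thesis by simp
  qed
  then have "(\<lambda>i. b + i * L) ` {..<b div L} \<subseteq> A \<inter> {0..2 * b}" using b(3) by auto
  moreover have "inj_on (\<lambda>i. b + i * L) {..<b div L}" using assms(1) by (auto simp: inj_on_def)
  ultimately have "b div L \<le> card (A \<inter> {0..2 * b})"
    by (metis card_image card_lessThan card_mono finite_Int finite_atLeastAtMost)
  then have "real (b div L) / real (2 * b + 1) \<le> real (card (A \<inter> {0..2 * b})) / real (2 * b + 1)"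
    by (simp add: divide_right_mono)
  with div_over_double_ge[OF assms(1) b(2)] b(1)
  show "\<exists>N\<ge>N0. 1 / (6 * real L) \<le> real (card (A \<inter> {0..N})) / real (N + 1)"
    by (intro exI[of _ "2 * b"]) auto
qed

section \<open>Weights of the backward shift\<close>

definition bws_weight :: "real \<Rightarrow> nat \<Rightarrow> nat \<Rightarrow> real" where
  "bws_weight \<mu> k n = (\<Prod>i\<in>{Suc k..k + n}. 1 + \<mu> / real i)"

lemma bws_weight_0 [simp]: "bws_weight \<mu> k 0 = 1"
  by (simp add: bws_weight_def)

lemma bws_weight_add: "bws_weight \<mu> k (m + n) = bws_weight \<mu> k m * bws_weight \<mu> (k + m) n"
proof -
  have "{Suc k..k + (m + n)} = {Suc k..k + m} \<union> {Suc (k + m)..k + m + n}" by auto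
  then show ?thesis unfolding bws_weight_def by (simp add: prod.union_disjoint add.assoc)
qed

lemma bws_weight_Suc: "bws_weight \<mu> k (Suc n) = (1 + \<mu> / real (Suc k)) * bws_weight \<mu> (Suc k) n"
  using bws_weight_add[of \<mu> k 1 n] by (simp add: bws_weight_def)

lemma bws_weight_Suc': "bws_weight \<mu> k (Suc n) = bws_weight \<mu> k n * (1 + \<mu> / real (Suc (k + n)))"
  using bws_weight_add[of \<mu> k n 1] by (simp add: bws_weight_def)

lemma bws_weight_ge_1: "\<mu> \<ge> 0 \<Longrightarrow> bws_weight \<mu> k n \<ge> 1"
  unfolding bws_weight_def by (intro prod_ge_1) auto

lemma bws_weight_pos: "\<mu> \<ge> 0 \<Longrightarrow> bws_weight \<mu> k n > 0"
  using bws_weight_ge_1[of \<mu> k n] by simp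

lemma bws_weight_mono: "0 \<le> \<mu>0 \<Longrightarrow> \<mu>0 \<le> \<mu> \<Longrightarrow> bws_weight \<mu>0 k n \<le> bws_weight \<mu> k n"
  unfolding bws_weight_def by (intro prod_mono) (auto simp: divide_right_mono)

lemma bws_weight_le_pow: "\<mu> \<ge> 0 \<Longrightarrow> bws_weight \<mu> k n \<le> (1 + \<mu>) ^ n"
proof -
  assume "\<mu> \<ge> 0"
  moreover have "\<mu> / real i \<le> \<mu>" if "i \<ge> 1" for i
    using divide_left_mono[of 1 "real i" \<mu>] that \<open>\<mu> \<ge> 0\<close> by simp
  ultimately have "bws_weight \<mu> k n \<le> (\<Prod>i\<in>{Suc k..k + n}. 1 + \<mu>)"
    unfolding bws_weight_def by (intro prod_mono) auto
  then show ?thesis by simp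
qed

lemma bws_weight_le_mult:
  assumes "0 \<le> \<mu>0" "\<mu>0 \<le> \<mu>"
  shows "bws_weight \<mu> k n \<le> bws_weight \<mu>0 k n * bws_weight (\<mu> - \<mu>0) k n"
  unfolding bws_weight_def prod.distrib[symmetric]
proof (intro prod_mono conjI)
  fix i assume "i \<in> {Suc k..k + n}"
  then have "real i > 0" by simp
  have "(1 + \<mu>0 / real i) * (1 + (\<mu> - \<mu>0) / real i) = 1 + \<mu> / real i + \<mu>0 * (\<mu> - \<mu>0) / (real i)\<^sup>2"
    using \<open>real i > 0\<close> by (simp add: field_simps power2_eq_square)
  then show "1 + \<mu> / real i \<le> (1 + \<mu>0 / real i) * (1 + (\<mu> - \<mu>0) / real i)"
    using assms by simp
qed (use assms in simp)

lemma bws_iterate: "(bws \<mu> ^^ n) x k = of_real (bws_weight \<mu> k n) * x (k + n)"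
proof (induction n arbitrary: k)
  case (Suc n)
  then show ?case by (simp add: bws_def bws_weight_Suc)
qed simp

lemma bws_iterate_lp:
  assumes "\<mu> \<ge> 0" "x \<in> lp p" "p > 0"
  shows "(bws \<mu> ^^ n) x \<in> lp p"
proof (rule lpI, rule summable_comparison_test)
  have "norm ((bws \<mu> ^^ n) x k) powr p \<le> ((1 + \<mu>) ^ n) powr p * norm (x (k + n)) powr p" for k
  proof -
    have "norm ((bws \<mu> ^^ n) x k) = bws_weight \<mu> k n * norm (x (k + n))"
      using less_imp_le[OF bws_weight_pos[OF assms(1)]] by (simp add: bws_iterate norm_mult)
    also have "\<dots> \<le> (1 + \<mu>) ^ n * norm (x (k + n))"
      by (intro mult_right_mono bws_weight_le_pow assms) simp
    finally have "norm ((bws \<mu> ^^ n) x k) \<le> (1 + \<mu>) ^ n * norm (x (k + n))" .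
    then show ?thesis using assms by (simp add: powr_mono2 flip: powr_mult)
  qed
  then show "\<exists>N. \<forall>k\<ge>N. norm (norm ((bws \<mu> ^^ n) x k) powr p) \<le> ((1 + \<mu>) ^ n) powr p * norm (x (k + n)) powr p"
    by simp
  show "summable (\<lambda>k. ((1 + \<mu>) ^ n) powr p * norm (x (k + n)) powr p)"
    using lp_summable[OF assms(2)]
    by (intro summable_mult) (simp add: add.commute summable_iff_shift[where f = "\<lambda>i. norm (x i) powr p"])
qed

lemma one_plus_div_le_powr:
  assumes "\<eta> \<ge> 0" "n \<ge> 1"
  shows "1 + \<eta> / real (Suc n) \<le> (real (Suc n) / real n) powr \<eta>"
proof -
  have "real n > 0" using assms by simp
  have "ln (real n / real (Suc n)) \<le> real n / real (Suc n) - 1"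
    by (rule ln_le_minus_one) (use \<open>real n > 0\<close> in simp)
  also have "\<dots> = - 1 / real (Suc n)" by (simp add: field_simps)
  finally have l: "1 / real (Suc n) \<le> ln (real (Suc n) / real n)"
    using \<open>real n > 0\<close> by (simp add: ln_div)
  have "1 + \<eta> / real (Suc n) \<le> exp (\<eta> / real (Suc n))" by (rule exp_ge_add_one_self)
  also have "\<dots> \<le> exp (\<eta> * ln (real (Suc n) / real n))"
    using mult_left_mono[OF l assms(1)] by simp
  also have "\<dots> = (real (Suc n) / real n) powr \<eta>"
    using \<open>real n > 0\<close> by (simp add: powr_def mult.commute)
  finally show ?thesis .
qed

lemma bws_weight_le_ratio_powr:
  assumes "\<eta> \<ge> 0" "k \<ge> 1"
  shows "bws_weight \<eta> k n \<le> (real (k + n) / real k) powr \<eta>"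
proof (induction n)
  case (Suc n)
  have "bws_weight \<eta> k (Suc n) \<le> (real (k + n) / real k) powr \<eta> * (real (Suc (k + n)) / real (k + n)) powr \<eta>"
    unfolding bws_weight_Suc' using Suc.IH one_plus_div_le_powr[OF assms(1), of "k + n"] assms
    by (intro mult_mono) (auto intro: bws_weight_ge_1 order.trans[OF zero_le_one])
  also have "\<dots> = (real (k + Suc n) / real k) powr \<eta>"
    using assms by (simp add: powr_mult[symmetric])
  finally show ?case .
qed (use assms in simp)

lemma bws_weight_le_powr:
  assumes "\<eta> \<ge> 0" "k + n \<ge> 1"
  shows "bws_weight \<eta> k n \<le> (1 + \<eta>) * real (k + n) powr \<eta>"
proof (cases "k = 0")
  case True
  then obtain m where n: "n = Suc m" using assms by (cases n) auto
  have "bws_weight \<eta> 0 (Suc m) = (1 + \<eta>) * bws_weight \<eta> 1 m" by (simp add: bws_weight_Suc)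
  also have "\<dots> \<le> (1 + \<eta>) * (real (1 + m) / real 1) powr \<eta>"
    using bws_weight_le_ratio_powr[OF assms(1), of 1 m] assms by (intro mult_left_mono) auto
  finally show ?thesis using True n by simp
next
  case False
  have "bws_weight \<eta> k n \<le> (real (k + n) / real k) powr \<eta>"
    using bws_weight_le_ratio_powr[OF assms(1)] False by simp
  also have "\<dots> \<le> real (k + n) powr \<eta>"
    using False assms by (intro powr_mono2) (auto simp: divide_le_eq)
  also have "\<dots> \<le> (1 + \<eta>) * real (k + n) powr \<eta>" using assms by simp
  finally show ?thesis .
qed

lemma powr_one_plus_le:
  fixes \<delta> x :: real
  assumes "0 \<le> \<delta>" "\<delta> \<le> 1" "x \<ge> 0"
  shows "(1 + x) powr \<delta> \<le> 1 + \<delta> * x"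
  using Youngs_inequality_0[of \<delta> "1 - \<delta>" "1 + x" 1] assms by (simp add: algebra_simps)

lemma ratio_powr_step_le:
  assumes "0 \<le> \<delta>" "\<delta> \<le> 1" "1 + \<delta> \<le> \<mu>"
  shows "real (m + 2) / real (m + 1) * (real (m + 3) / real (m + 2)) powr \<delta> \<le> 1 + \<mu> / real (Suc m)"
proof -
  have "(real (m + 3) / real (m + 2)) powr \<delta> = (1 + 1 / real (m + 2)) powr \<delta>"
    by (simp add: field_simps)
  also have "\<dots> \<le> 1 + \<delta> / real (m + 2)" using powr_one_plus_le[of \<delta> "1 / real (m + 2)"] assms by simp
  finally have "real (m + 2) / real (m + 1) * (real (m + 3) / real (m + 2)) powr \<delta>
      \<le> real (m + 2) / real (m + 1) * (1 + \<delta> / real (m + 2))"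
    by (intro mult_left_mono) auto
  also have "\<dots> = (real m + 2 + \<delta>) / (real m + 1)"
  proof -
    have "real (m + 2) * (1 + \<delta> / real (m + 2)) = real m + 2 + \<delta>" by (simp add: field_simps)
    then show ?thesis unfolding times_divide_eq_left by simp
  qed
  also have "\<dots> \<le> (real m + 1 + \<mu>) / (real m + 1)" using assms by (intro divide_right_mono) auto
  also have "\<dots> = 1 + \<mu> / real (Suc m)" by (simp add: field_simps)
  finally show ?thesis .
qed

text \<open>The induction carries the sharper bound
  \<open>(k + n + 1)/(k + 1) \<cdot> ((k + n + 2)/(k + 2))^\<delta>\<close>.\<close>

lemma bws_weight_ge_ratio_powr:
  assumes "0 \<le> \<delta>" "\<delta> \<le> 1" "1 + \<delta> \<le> \<mu>"
  shows "(real (k + n + 1) / real (k + 2)) powr (1 + \<delta>) \<le> bws_weight \<mu> k n"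
proof -
  define g where "g m = real (m + 1) / real (k + 1) * (real (m + 2) / real (k + 2)) powr \<delta>" for m
  have "g (k + n) \<le> bws_weight \<mu> k n"
  proof (induction n)
    case (Suc n)
    define m where "m = k + n"
    have r1: "real (Suc m + 1) / real (k + 1) = real (m + 1) / real (k + 1) * (real (m + 2) / real (m + 1))"
      by simp
    have r2: "(real (Suc m + 2) / real (k + 2)) powr \<delta>
        = (real (m + 2) / real (k + 2)) powr \<delta> * (real (m + 3) / real (m + 2)) powr \<delta>"
      by (simp add: powr_mult[symmetric] ac_simps)
    have "g (Suc m) = g m * (real (m + 2) / real (m + 1) * (real (m + 3) / real (m + 2)) powr \<delta>)"
      unfolding g_def r1 r2 by (simp only: mult_ac)
    also have "\<dots> \<le> g m * (1 + \<mu> / real (Suc m))"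
      using ratio_powr_step_le[OF assms] by (intro mult_left_mono) (auto simp: g_def)
    also have "\<dots> \<le> bws_weight \<mu> k (Suc n)"
      unfolding bws_weight_Suc' m_def using Suc.IH assms by (intro mult_right_mono) auto
    finally show ?case by (simp add: m_def)
  qed (simp add: g_def)
  moreover have "(real (k + n + 1) / real (k + 2)) powr (1 + \<delta>) \<le> g (k + n)"
  proof -
    have "(real (k + n + 1) / real (k + 2)) powr (1 + \<delta>)
        = real (k + n + 1) / real (k + 2) * (real (k + n + 1) / real (k + 2)) powr \<delta>"
      by (simp add: powr_add)
    also have "\<dots> \<le> g (k + n)" unfolding g_def
      using assms by (intro mult_mono powr_mono2 divide_left_mono divide_right_mono) auto
    finally show ?thesis .
  qed
  ultimately show ?thesis by linarith
qed

text \<open>The weights grow at most by the factor \<open>(1 + \<epsilon>/3) 2^(\<epsilon>/3) \<le> (1 + \<epsilon>/3)\<^sup>2 \<le> 1 + \<epsilon>\<close>.\<close>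

lemma bws_weight_perturb_le:
  assumes "0 \<le> \<mu>0" "\<mu>0 \<le> \<mu>" "\<mu> \<le> \<mu>0 + \<epsilon> / 3 / real (N + 2)" "0 < \<epsilon>" "\<epsilon> \<le> 1"
    and "1 \<le> k + n" "k + n \<le> 2 ^ (N + 2)"
  shows "bws_weight \<mu> k n \<le> (1 + \<epsilon>) * bws_weight \<mu>0 k n"
proof -
  define \<eta> where "\<eta> = \<epsilon> / 3 / real (N + 2)"
  define \<theta> where "\<theta> = \<epsilon> / 3"
  have "\<eta> \<ge> 0" "\<theta> > 0" using assms by (simp_all add: \<eta>_def \<theta>_def)
  have "bws_weight \<mu> k n \<le> bws_weight \<mu>0 k n * bws_weight (\<mu> - \<mu>0) k n"
    by (rule bws_weight_le_mult[OF assms(1,2)])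
  also have "bws_weight (\<mu> - \<mu>0) k n \<le> bws_weight \<eta> k n"
    using assms(2,3) by (intro bws_weight_mono) (auto simp: \<eta>_def)
  also have "\<dots> \<le> (1 + \<eta>) * real (k + n) powr \<eta>"
    by (rule bws_weight_le_powr[OF \<open>\<eta> \<ge> 0\<close> assms(6)])
  also have "real (k + n) powr \<eta> \<le> real ((2::nat) ^ (N + 2)) powr \<eta>"
    using assms(6,7) \<open>\<eta> \<ge> 0\<close> by (intro powr_mono2) (auto simp del: of_nat_power)
  also have "real ((2::nat) ^ (N + 2)) powr \<eta> = 2 powr \<theta>"
  proof -
    define a where "a = real (N + 2)"
    have "a > 0" by (simp add: a_def)
    have "2 powr a = (2::real) ^ (N + 2)" unfolding a_def by (rule powr_realpow) simp
    then have "real ((2::nat) ^ (N + 2)) = 2 powr a" by simp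
    then have "real ((2::nat) ^ (N + 2)) powr \<eta> = 2 powr (a * (\<theta> / a))"
      by (simp add: powr_powr \<eta>_def \<theta>_def a_def)
    then show ?thesis using \<open>a > 0\<close> by simp
  qed
  also have "2 powr \<theta> \<le> 1 + \<theta>"
    using powr_one_plus_le[of \<theta> 1] \<open>\<theta> > 0\<close> assms(5) by (simp add: \<theta>_def)
  also have "1 + \<eta> \<le> 1 + \<theta>"
    using \<open>\<theta> > 0\<close> by (simp add: \<eta>_def \<theta>_def divide_le_eq)
  finally have "bws_weight \<mu> k n \<le> bws_weight \<mu>0 k n * ((1 + \<theta>) * (1 + \<theta>))"
    using bws_weight_pos[OF assms(1)] \<open>\<eta> \<ge> 0\<close> \<open>\<theta> > 0\<close>
    by (auto elim!: order_trans intro!: mult_left_mono mult_right_mono)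
  also have "(1 + \<theta>) * (1 + \<theta>) \<le> 1 + \<epsilon>"
  proof -
    have "\<theta> * \<theta> \<le> \<theta>" using \<open>\<theta> > 0\<close> assms(5) by (simp add: \<theta>_def mult_le_cancel_left1)
    then show ?thesis by (simp add: \<theta>_def algebra_simps)
  qed
  finally show ?thesis using bws_weight_pos[OF assms(1)] by (simp add: mult.commute mult_left_mono)
qed

lemma bws_iterate_tail_le:
  assumes "\<mu> \<ge> 0" "n \<ge> 1" "z \<in> lp p" "p > 0"
  shows "(\<Sum>i. norm ((bws \<mu> ^^ n) z (i + n)) powr p) \<le> (2 powr \<mu>) powr p * (\<Sum>i. norm (z (i + 2 * n)) powr p)"
proof -
  have sz: "summable (\<lambda>i. norm (z (i + 2 * n)) powr p)"
    using lp_summable[OF assms(3)] summable_iff_shift[of "\<lambda>i. norm (z i) powr p" "2 * n"] by simp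
  have le: "norm ((bws \<mu> ^^ n) z (i + n)) powr p \<le> (2 powr \<mu>) powr p * norm (z (i + 2 * n)) powr p" for i
  proof -
    have "bws_weight \<mu> (i + n) n \<le> (real (i + n + n) / real (i + n)) powr \<mu>"
      using bws_weight_le_ratio_powr[OF assms(1), of "i + n" n] assms(2) by simp
    also have "\<dots> \<le> 2 powr \<mu>" using assms(1,2) by (intro powr_mono2) (auto simp: divide_le_eq)
    finally have "norm ((bws \<mu> ^^ n) z (i + n)) \<le> 2 powr \<mu> * norm (z (i + 2 * n))"
      using bws_weight_pos[OF assms(1), of "i + n" n]
      by (simp add: bws_iterate norm_mult mult_2 add.assoc mult_right_mono)
    then show ?thesis using assms(4) by (simp add: powr_mono2 flip: powr_mult)
  qed
  have "summable (\<lambda>i. norm ((bws \<mu> ^^ n) z (i + n)) powr p)"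
    using lp_summable[OF bws_iterate_lp[OF assms(1,3,4), of n]]
      summable_iff_shift[of "\<lambda>i. norm ((bws \<mu> ^^ n) z i) powr p" n] by simp
  then have "(\<Sum>i. norm ((bws \<mu> ^^ n) z (i + n)) powr p) \<le> (\<Sum>i. (2 powr \<mu>) powr p * norm (z (i + 2 * n)) powr p)"
    using le sz by (intro suminf_le summable_mult) auto
  also have "\<dots> = (2 powr \<mu>) powr p * (\<Sum>i. norm (z (i + 2 * n)) powr p)" by (rule suminf_mult[OF sz])
  finally show ?thesis .
qed

definition zeta_tail :: "real \<Rightarrow> nat \<Rightarrow> real" where
  "zeta_tail \<delta> L = (\<Sum>d. real (d + Suc L) powr -(1 + \<delta>))"

lemma summable_zeta_tail: "\<delta> > 0 \<Longrightarrow> summable (\<lambda>d. real (d + Suc L) powr -(1 + \<delta>))"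
  using summable_real_powr_iff[of "-(1 + \<delta>)"]
    summable_iff_shift[of "\<lambda>n. real n powr -(1 + \<delta>)" "Suc L"] by simp

lemma zeta_tail_nonneg: "\<delta> > 0 \<Longrightarrow> zeta_tail \<delta> L \<ge> 0"
  unfolding zeta_tail_def by (intro suminf_nonneg summable_zeta_tail) auto

lemma eventually_zeta_tail_less:
  assumes "\<delta> > 0" "r > 0"
  shows "\<exists>N. \<forall>L\<ge>N. zeta_tail \<delta> L < r"
proof -
  have "summable (\<lambda>n. real n powr -(1 + \<delta>))" using summable_real_powr_iff assms by simp
  then obtain N where N: "\<And>n. n \<ge> N \<Longrightarrow> norm (\<Sum>i. real (i + n) powr -(1 + \<delta>)) < r"
    using suminf_exist_split[OF assms(2)] by blast
  have "zeta_tail \<delta> L < r" if "L \<ge> N" for L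
    using N[of "Suc L"] that unfolding zeta_tail_def real_norm_def by linarith
  then show ?thesis by blast
qed

lemma sum_le_zeta_tail:
  assumes "\<delta> > 0"
  shows "(\<Sum>k\<in>{A..<B}. real (k + 1) powr -(1 + \<delta>)) \<le> zeta_tail \<delta> A"
proof (cases "A \<le> B")
  case True
  have "(\<Sum>k\<in>{A..<B}. real (k + 1) powr -(1 + \<delta>)) = (\<Sum>d<B - A. real (d + Suc A) powr -(1 + \<delta>))"
    using True by (intro sum.reindex_bij_witness[of _ "\<lambda>d. d + A" "\<lambda>k. k - A"]) auto
  also have "\<dots> \<le> zeta_tail \<delta> A"
    unfolding zeta_tail_def by (rule sum_le_suminf) (use summable_zeta_tail[OF assms] in auto)
  finally show ?thesis .
qed (use zeta_tail_nonneg[OF assms] in simp)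

lemma harmonic_tail_unbounded: "\<exists>r. (\<Sum>i<r. 1 / real (i + c)) > B"
proof (rule ccontr)
  assume "\<not> ?thesis"
  then have "summable (\<lambda>i. 1 / real (i + c))"
    by (intro summableI_nonneg_bounded[where x = B]) (auto simp: not_less)
  then have "summable (\<lambda>n. inverse (real n) :: real)"
    using summable_iff_shift[of "\<lambda>n. inverse (real n) :: real" c] by (simp add: divide_inverse)
  then show False using not_summable_harmonic by blast
qed

lemma powr_le_mult_powr:
  fixes v c x p :: real
  assumes "p \<ge> 1" "0 \<le> v" "v \<le> c * x" "0 \<le> c" "0 \<le> x" "x \<le> 1"
  shows "v powr p \<le> c powr p * x"
proof -
  have "v powr p \<le> (c * x) powr p" using assms by (intro powr_mono2) auto
  also have "\<dots> = c powr p * x powr p" using assms by (simp add: powr_mult)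
  also have "\<dots> \<le> c powr p * x" using assms by (intro mult_left_mono powr_le_self) auto
  finally show ?thesis .
qed

lemma weight_bracket:
  fixes \<mu> :: real
  assumes "\<mu> > 1"
  obtains q :: nat where "1 + 1 / real (q + 2) \<le> \<mu>" "\<mu> \<le> real (q + 2)"
proof
  define q where "q = nat \<lceil>max \<mu> (1 / (\<mu> - 1))\<rceil>"
  have q: "max \<mu> (1 / (\<mu> - 1)) \<le> real q" unfolding q_def by (rule real_nat_ceiling_ge)
  then show "\<mu> \<le> real (q + 2)" by simp
  have "1 / (\<mu> - 1) \<le> real (q + 2)" using q by simp
  then have "1 / real (q + 2) \<le> 1 / (1 / (\<mu> - 1))" using assms by (intro divide_left_mono) auto
  then show "1 + 1 / real (q + 2) \<le> \<mu>" using assms by simp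
qed

section \<open>The construction\<close>

locale sweep_construction =
  fixes p :: real and D :: "'a::real_normed_field set"
  assumes p_ge_1: "p \<ge> 1" and countable_D: "countable D" and zero_in_D: "0 \<in> D"
    and one_in_D: "1 \<in> D" and dense_D: "\<And>a e. e > 0 \<Longrightarrow> \<exists>d\<in>D. norm (a - d) < e"
begin

lemma p_pos: "p > 0"
  using p_ge_1 by simp

definition pattern :: "nat \<Rightarrow> nat \<Rightarrow> 'a" where
  "pattern j = from_nat_into (finite_patterns D) j"

lemma pattern_in: "pattern j \<in> finite_patterns D"
proof -
  have "(\<lambda>_. 0) \<in> finite_patterns D" using zero_in_D by (simp add: finite_patterns_def)
  then show ?thesis unfolding pattern_def by (intro from_nat_into) blast
qed

lemma pattern_surj: "y \<in> finite_patterns D \<Longrightarrow> \<exists>j. pattern j = y"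
  unfolding pattern_def
  using from_nat_into_surj[OF countable_finite_patterns[OF countable_D zero_in_D]] by blast

text \<open>Stage \<open>s\<close> encodes a class \<open>k\<close>, a pattern index \<open>j\<close>, a tolerance \<open>1/(t+1)\<close> and the largest
  weight parameter \<open>q + 2\<close> it serves; the extra component of the Cantor pairing makes every
  such tuple recur infinitely often.\<close>

definition stage_code :: "nat \<Rightarrow> nat \<times> nat \<times> nat \<times> nat" where
  "stage_code s = (let (k, c) = prod_decode (fst (prod_decode s)); (j, c') = prod_decode c
     in (k, j, prod_decode c'))"

lemma stage_code_frequently: "\<exists>s\<ge>N. stage_code s = (k, j, t, q)"
proof -
  define s where "s = prod_encode (prod_encode (k, prod_encode (j, prod_encode (t, q))), N)"
  have "s \<ge> N" unfolding s_def by (rule le_prod_encode_2)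
  moreover have "stage_code s = (k, j, t, q)" by (simp add: s_def stage_code_def)
  ultimately show ?thesis by blast
qed

definition stage_class :: "nat \<Rightarrow> nat" where
  "stage_class s = fst (stage_code s)"

definition stage_pattern :: "nat \<Rightarrow> nat \<Rightarrow> 'a" where
  "stage_pattern s = pattern (fst (snd (stage_code s)))"

definition stage_eps :: "nat \<Rightarrow> real" where
  "stage_eps s = 1 / real (fst (snd (snd (stage_code s))) + 1)"

definition stage_top :: "nat \<Rightarrow> nat" where
  "stage_top s = snd (snd (snd (stage_code s))) + 2"

definition stage_delta :: "nat \<Rightarrow> real" where
  "stage_delta s = 1 / real (stage_top s)"

definition stage_supp :: "nat \<Rightarrow> nat" where
  "stage_supp s = pattern_length (stage_pattern s) + 1"

definition stage_bound :: "nat \<Rightarrow> real" where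
  "stage_bound s = pattern_bound (stage_pattern s)"

definition stage_const :: "nat \<Rightarrow> real" where
  "stage_const s = (2 * stage_bound s * (real (stage_supp s) + 1)\<^sup>2) powr p"

lemma stage_pattern_in: "stage_pattern s \<in> finite_patterns D"
  by (simp add: stage_pattern_def pattern_in)

lemma stage_pattern_zero: "k \<ge> stage_supp s \<Longrightarrow> stage_pattern s k = 0"
  using pattern_length_zero[OF stage_pattern_in, of "s" k] by (simp add: stage_supp_def)

lemma norm_stage_pattern_le: "norm (stage_pattern s k) \<le> stage_bound s"
  unfolding stage_bound_def by (rule norm_le_pattern_bound[OF stage_pattern_in])

lemma stage_bound_ge_1: "stage_bound s \<ge> 1"
  unfolding stage_bound_def by (rule pattern_bound_ge_1)

lemma stage_supp_pos: "stage_supp s > 0"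
  by (simp add: stage_supp_def)

lemma stage_delta_pos: "stage_delta s > 0"
  by (simp add: stage_delta_def stage_top_def)

lemma stage_delta_le: "stage_delta s \<le> 1/2"
  by (simp add: stage_delta_def stage_top_def)

lemma stage_eps_pos: "stage_eps s > 0"
  by (simp add: stage_eps_def)

lemma stage_eps_le_1: "stage_eps s \<le> 1"
  by (simp add: stage_eps_def)

lemma stage_const_pos: "stage_const s > 0"
  using stage_bound_ge_1[of s] by (simp add: stage_const_def)

text \<open>The copies of the stage pattern are placed with period \<open>stage_period s\<close>; it is chosen so
  large that the decaying tails behind the copies stay below the tolerance.\<close>

definition stage_period :: "nat \<Rightarrow> nat" where
  "stage_period s = (LEAST L. stage_supp s \<le> L \<and> stage_const s * zeta_tail (stage_delta s) L \<le> stage_eps s)"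

lemma stage_period:
  "stage_supp s \<le> stage_period s" "stage_const s * zeta_tail (stage_delta s) (stage_period s) \<le> stage_eps s"
proof -
  obtain N where N: "\<forall>L\<ge>N. zeta_tail (stage_delta s) L < stage_eps s / stage_const s"
    using eventually_zeta_tail_less[OF stage_delta_pos] stage_eps_pos stage_const_pos by force
  define L where "L = max N (stage_supp s)"
  have "stage_supp s \<le> L \<and> stage_const s * zeta_tail (stage_delta s) L \<le> stage_eps s"
    using N[rule_format, of L] stage_const_pos[of s] by (simp add: L_def field_simps)
  then have "stage_supp s \<le> stage_period s \<and>
      stage_const s * zeta_tail (stage_delta s) (stage_period s) \<le> stage_eps s"
    unfolding stage_period_def by (rule LeastI)
  then show "stage_supp s \<le> stage_period s"
    "stage_const s * zeta_tail (stage_delta s) (stage_period s) \<le> stage_eps s" by auto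
qed

lemma stage_period_pos: "stage_period s > 0"
  using stage_period(1)[of s] stage_supp_pos[of s] by linarith

lemma stage_period_eq:
  "snd (stage_code s) = snd (stage_code s') \<Longrightarrow> stage_period s = stage_period s'"
  by (simp add: stage_period_def stage_supp_def stage_const_def stage_bound_def stage_pattern_def
      stage_delta_def stage_top_def stage_eps_def)

text \<open>Region \<open>r\<close> of a stage starting at \<open>2^e\<close> serves the weight parameters between
  \<open>sweep_mu s e r\<close> and \<open>sweep_mu s e (r + 1)\<close>; the increments \<open>\<epsilon>/(3(r + e + 2))\<close> form a
  divergent series, so finitely many regions sweep \<open>[1 + \<delta>, q + 2]\<close>, while on the region
  \<open>[2^(e+r), 2^(e+r+2))\<close> an increment changes the weights only by a factor \<open>1 + \<epsilon>\<close>.\<close>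

definition sweep_mu :: "nat \<Rightarrow> nat \<Rightarrow> nat \<Rightarrow> real" where
  "sweep_mu s e r = 1 + stage_delta s + stage_eps s / 3 * (\<Sum>i<r. 1 / real (i + e + 2))"

lemma sweep_mu_0: "sweep_mu s e 0 = 1 + stage_delta s"
  by (simp add: sweep_mu_def)

lemma sweep_mu_Suc: "sweep_mu s e (Suc r) = sweep_mu s e r + stage_eps s / 3 / real (r + e + 2)"
  by (simp add: sweep_mu_def algebra_simps)

lemma sweep_mu_ge: "sweep_mu s e r \<ge> 1 + stage_delta s"
  unfolding sweep_mu_def using stage_eps_pos[of s] by (simp add: sum_nonneg)

lemma sweep_mu_nonneg: "sweep_mu s e r \<ge> 0"
  using sweep_mu_ge[of s e r] stage_delta_pos[of s] by linarith

definition sweep_length :: "nat \<Rightarrow> nat \<Rightarrow> nat" where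
  "sweep_length s e = (LEAST R. real (stage_top s) \<le> sweep_mu s e R)"

lemma sweep_length: "real (stage_top s) \<le> sweep_mu s e (sweep_length s e)"
proof -
  obtain r where "(\<Sum>i<r. 1 / real (i + (e + 2))) > real (stage_top s) / (stage_eps s / 3)"
    using harmonic_tail_unbounded by blast
  then have "stage_eps s / 3 * (\<Sum>i<r. 1 / real (i + e + 2)) > real (stage_top s)"
    using stage_eps_pos[of s] by (simp add: field_simps add.assoc)
  then have "real (stage_top s) \<le> sweep_mu s e r"
    unfolding sweep_mu_def using stage_delta_pos[of s] by simp
  then show ?thesis unfolding sweep_length_def by (rule LeastI)
qed

lemma sweep_length_pos: "sweep_length s e > 0"
proof (rule ccontr)
  assume "\<not> ?thesis"
  then have "real (stage_top s) \<le> 1 + stage_delta s" using sweep_length[of s e] by (simp add: sweep_mu_0)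
  then show False using stage_delta_le[of s] by (simp add: stage_top_def)
qed

lemma sweep_covers:
  assumes "1 + stage_delta s \<le> \<mu>" "\<mu> \<le> real (stage_top s)"
  obtains r where "r < sweep_length s e" "sweep_mu s e r \<le> \<mu>" "\<mu> \<le> sweep_mu s e (Suc r)"
proof -
  define P where "P r \<longleftrightarrow> \<mu> \<le> sweep_mu s e (Suc r)" for r
  have "P (sweep_length s e - 1)"
    unfolding P_def using sweep_length[of s e] sweep_length_pos[of s e] assms(2) by simp
  define r where "r = (LEAST r. P r)"
  have "P r" unfolding r_def by (rule LeastI) fact
  moreover have "r \<le> sweep_length s e - 1" unfolding r_def by (rule Least_le) fact
  moreover have "sweep_mu s e r \<le> \<mu>"
  proof (cases r)
    case (Suc r')
    then have "\<not> P r'" using not_less_Least[of r' P] by (simp add: r_def)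
    then show ?thesis using Suc by (simp add: P_def)
  qed (use assms in \<open>simp add: sweep_mu_0\<close>)
  ultimately show thesis using sweep_length_pos[of s e] by (intro that[of r]) (auto simp: P_def)
qed

text \<open>Stage \<open>s\<close> occupies \<open>[2^e, 2^(e + R))\<close> with \<open>e = stage_start s\<close> and \<open>R\<close> its number of
  regions; the gap before the next stage makes the support of the seed vector sparse.\<close>

definition stage_start_ok :: "nat \<Rightarrow> nat \<Rightarrow> bool" where
  "stage_start_ok s e \<longleftrightarrow> 8 * stage_period s \<le> 2 ^ e \<and>
     stage_const s * zeta_tail (stage_delta s) (2 ^ e) \<le> (1/2) ^ s"

lemma stage_start_ok_exists: "\<exists>e\<ge>X. stage_start_ok s e"
proof -
  obtain N where N: "\<forall>L\<ge>N. zeta_tail (stage_delta s) L < (1/2) ^ s / stage_const s"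
    using eventually_zeta_tail_less[OF stage_delta_pos] stage_const_pos by force
  define e where "e = max X (max N (8 * stage_period s))"
  have "e < 2 ^ e" by (rule less_exp)
  then have "2 ^ e \<ge> N" "2 ^ e \<ge> 8 * stage_period s" unfolding e_def by linarith+
  then have "stage_start_ok s e"
    unfolding stage_start_ok_def using N[rule_format, of "2 ^ e"] stage_const_pos[of s]
    by (simp add: field_simps)
  then show ?thesis by (intro exI[of _ e]) (auto simp: e_def)
qed

primrec stage_start :: "nat \<Rightarrow> nat" where
  "stage_start 0 = (LEAST e. stage_start_ok 0 e)"
| "stage_start (Suc s) = (LEAST e. stage_start s + sweep_length s (stage_start s) + s + 2 \<le> e \<and>
     stage_start_ok (Suc s) e)"

abbreviation stage_regions :: "nat \<Rightarrow> nat" where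
  "stage_regions s \<equiv> sweep_length s (stage_start s)"

lemma stage_start_ok: "stage_start_ok s (stage_start s)"
  and stage_start_Suc_ge: "stage_start s + stage_regions s + s + 2 \<le> stage_start (Suc s)"
proof -
  have "stage_start_ok 0 (stage_start 0)"
    using stage_start_ok_exists[of 0 0] unfolding stage_start.simps by (auto intro: LeastI)
  moreover have Suc: "stage_start s + stage_regions s + s + 2 \<le> stage_start (Suc s) \<and>
      stage_start_ok (Suc s) (stage_start (Suc s))" for s
  proof -
    obtain e where "stage_start s + stage_regions s + s + 2 \<le> e \<and> stage_start_ok (Suc s) e"
      using stage_start_ok_exists[of "stage_start s + stage_regions s + s + 2" "Suc s"] by blast
    then show ?thesis unfolding stage_start.simps by (rule LeastI)
  qed
  ultimately show "stage_start_ok s (stage_start s)" by (cases s) auto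
  show "stage_start s + stage_regions s + s + 2 \<le> stage_start (Suc s)" using Suc by blast
qed

lemma stage_start_ge: "s \<le> stage_start s"
proof (induction s)
  case (Suc s)
  then show ?case using stage_start_Suc_ge[of s] by simp
qed simp

lemma stage_start_less:
  "s < s' \<Longrightarrow> stage_start s + stage_regions s + s + 2 \<le> stage_start s'"
proof (induction s' rule: less_induct)
  case (less s')
  then obtain s'' where s': "s' = Suc s''" by (cases s') auto
  show ?case
  proof (cases "s = s''")
    case False
    with less s' have "stage_start s + stage_regions s + s + 2 \<le> stage_start s''" by simp
    then show ?thesis using stage_start_Suc_ge[of s''] s' by simp
  qed (use stage_start_Suc_ge s' in simp)
qed

definition region_start :: "nat \<Rightarrow> nat \<Rightarrow> nat" where
  "region_start s r = 2 ^ (stage_start s + r)"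

definition in_region :: "nat \<Rightarrow> nat \<Rightarrow> nat \<Rightarrow> bool" where
  "in_region s r m \<longleftrightarrow> r < stage_regions s \<and> region_start s r \<le> m \<and> m < 2 * region_start s r"

text \<open>In region \<open>r\<close> of stage \<open>s\<close>, a copy of the stage pattern starts at every
  \<open>n = region_start s r + i L\<close> (\<open>L\<close> the period) with \<open>n + L \<le> 2 region_start s r\<close>; it is divided by
  the weights of \<open>B\<^sup>n\<close> at the parameter \<open>sweep_mu s (stage_start s) r\<close>, so that \<open>B\<^sup>n\<close> moves it
  back to (a multiple of) the pattern itself.\<close>

definition region_value :: "nat \<Rightarrow> nat \<Rightarrow> nat \<Rightarrow> 'a" where
  "region_value s r m =
    (let b = region_start s r; L = stage_period s; n = b + (m - b) div L * L; k = (m - b) mod L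
     in if k < stage_supp s \<and> n + L \<le> 2 * b
        then stage_pattern s k / of_real (bws_weight (sweep_mu s (stage_start s) r) k n) else 0)"

definition region_of :: "nat \<Rightarrow> nat \<times> nat" where
  "region_of m = (SOME (s, r). in_region s r m)"

definition seed :: "nat \<Rightarrow> 'a" where
  "seed m = (if \<exists>s r. in_region s r m then case_prod region_value (region_of m) m else 0)"

definition class_of :: "nat \<Rightarrow> nat" where
  "class_of m = (if \<exists>s r. in_region s r m then stage_class (fst (region_of m)) else 0)"

lemma region_start_Suc: "region_start s (Suc r) = 2 * region_start s r"
  by (simp add: region_start_def)

lemma region_start_ge: "8 * stage_period s \<le> region_start s r"
proof -
  have "8 * stage_period s \<le> 2 ^ stage_start s"
    using stage_start_ok[of s] by (simp add: stage_start_ok_def)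
  also have "(2::nat) ^ stage_start s \<le> 2 ^ (stage_start s + r)" by (intro power_increasing) auto
  finally show ?thesis by (simp add: region_start_def)
qed

lemma in_region_stage_bounds:
  assumes "in_region s r m"
  shows "2 ^ stage_start s \<le> m" "m < 2 ^ (stage_start s + stage_regions s)"
proof -
  have "(2::nat) ^ stage_start s \<le> 2 ^ (stage_start s + r)" by (intro power_increasing) auto
  moreover have "2 ^ (stage_start s + r) \<le> m" using assms by (simp add: in_region_def region_start_def)
  ultimately show "2 ^ stage_start s \<le> m" by linarith
  have "m < 2 ^ (stage_start s + Suc r)" using assms by (simp add: in_region_def region_start_def)
  also have "(2::nat) ^ (stage_start s + Suc r) \<le> 2 ^ (stage_start s + stage_regions s)"
    using assms by (intro power_increasing) (auto simp: in_region_def)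
  finally show "m < 2 ^ (stage_start s + stage_regions s)" .
qed

lemma in_region_stage_eq:
  assumes "in_region s r m" "in_region s' r' m"
  shows "s' = s"
proof (rule ccontr)
  have gap: "(2::nat) ^ (stage_start s1 + stage_regions s1) \<le> 2 ^ stage_start s2" if "s1 < s2" for s1 s2
    using stage_start_less[OF that] by (intro power_increasing) auto
  assume "s' \<noteq> s"
  then consider "s < s'" | "s' < s" by linarith
  then show False
    using gap[of s s'] gap[of s' s] in_region_stage_bounds[OF assms(1)] in_region_stage_bounds[OF assms(2)]
    by cases linarith+
qed

lemma in_region_region_eq:
  assumes "in_region s r m" "in_region s r' m"
  shows "r' = r"
proof (rule ccontr)
  have gap: "m < 2 ^ (stage_start s + Suc r1) \<Longrightarrow> 2 ^ (stage_start s + r2) \<le> m \<Longrightarrow> r2 \<le> r1" for r1 r2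
    using power_strict_increasing_iff[of "2::nat" "stage_start s + r2" "stage_start s + Suc r1"] by linarith
  assume "r' \<noteq> r"
  with assms gap[of r r'] gap[of r' r] show False by (auto simp: in_region_def region_start_def)
qed

lemma seed_in_region:
  assumes "in_region s r m"
  shows "seed m = region_value s r m" "class_of m = stage_class s"
proof -
  have "case_prod (\<lambda>s r. in_region s r m) (region_of m)"
    unfolding region_of_def by (rule someI[of _ "(s, r)"]) (simp add: assms)
  then have "in_region (fst (region_of m)) (snd (region_of m)) m" by (simp add: case_prod_beta)
  then have "region_of m = (s, r)"
    using in_region_stage_eq[OF assms] in_region_region_eq[OF assms] by (metis prod.collapse)
  then show "seed m = region_value s r m" "class_of m = stage_class s"
    using assms by (auto simp: seed_def class_of_def)
qed

lemma seed_outside: "(\<And>s r. \<not> in_region s r m) \<Longrightarrow> seed m = 0"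
  by (simp add: seed_def)

lemma region_value_nonzero:
  assumes "region_value s r m \<noteq> 0" "in_region s r m"
  obtains i k where "m = region_start s r + i * stage_period s + k" "k < stage_supp s"
    "region_start s r + i * stage_period s + stage_period s \<le> 2 * region_start s r"
    "region_value s r m = stage_pattern s k /
       of_real (bws_weight (sweep_mu s (stage_start s) r) k (region_start s r + i * stage_period s))"
proof -
  define b where "b = region_start s r"
  define L where "L = stage_period s"
  define i where "i = (m - b) div L"
  define k where "k = (m - b) mod L"
  have "m \<ge> b" using assms(2) by (simp add: in_region_def b_def)
  then have m: "m = b + i * L + k" by (simp add: i_def k_def)
  have c: "k < stage_supp s \<and> b + i * L + L \<le> 2 * b"
    using assms(1) unfolding region_value_def Let_def b_def[symmetric] L_def[symmetric]
      i_def[symmetric] k_def[symmetric] by (auto split: if_splits)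
  then have "region_value s r m =
      stage_pattern s k / of_real (bws_weight (sweep_mu s (stage_start s) r) k (b + i * L))"
    unfolding region_value_def Let_def b_def[symmetric] L_def[symmetric]
      i_def[symmetric] k_def[symmetric] by simp
  with m c show thesis by (intro that[of i k]) (simp_all add: b_def L_def)
qed

lemma seed_copy:
  assumes "r < stage_regions s" "n = region_start s r + i * stage_period s"
    "n + stage_period s \<le> 2 * region_start s r" "k < stage_supp s"
  shows "in_region s r (n + k)"
    "seed (n + k) = stage_pattern s k / of_real (bws_weight (sweep_mu s (stage_start s) r) k n)"
    "class_of (n + k) = stage_class s"
proof -
  have "k < stage_period s" using assms(4) stage_period(1)[of s] by simp
  then show in_reg: "in_region s r (n + k)" using assms by (simp add: in_region_def)
  have "(n + k - region_start s r) div stage_period s = i" "(n + k - region_start s r) mod stage_period s = k"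
    using assms(2) \<open>k < stage_period s\<close> by simp_all
  then show "seed (n + k) = stage_pattern s k / of_real (bws_weight (sweep_mu s (stage_start s) r) k n)"
    unfolding seed_in_region(1)[OF in_reg] region_value_def Let_def using assms by simp
  show "class_of (n + k) = stage_class s" by (rule seed_in_region(2)[OF in_reg])
qed

lemma pattern_decay_le:
  assumes "k' < stage_supp s" "k' \<le> k"
  shows "stage_bound s / (real (k + 1) / real (k' + 2)) powr (1 + stage_delta s)
    \<le> stage_bound s * (real (stage_supp s) + 1)\<^sup>2 * real (k + 1) powr -(1 + stage_delta s)"
proof -
  define \<delta> where "\<delta> = stage_delta s"
  have \<delta>: "0 \<le> \<delta>" "\<delta> \<le> 1" using stage_delta_pos[of s] stage_delta_le[of s] by (simp_all add: \<delta>_def)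
  have "(real (k + 1) / real (k' + 2)) powr (1 + \<delta>) = real (k + 1) powr (1 + \<delta>) / real (k' + 2) powr (1 + \<delta>)"
    by (rule powr_divide)
  then have "stage_bound s / (real (k + 1) / real (k' + 2)) powr (1 + \<delta>)
      = stage_bound s * real (k' + 2) powr (1 + \<delta>) * real (k + 1) powr -(1 + \<delta>)"
    unfolding powr_minus_divide by simp
  also have "\<dots> \<le> stage_bound s * (real (stage_supp s) + 1)\<^sup>2 * real (k + 1) powr -(1 + \<delta>)"
  proof -
    have "real (k' + 2) powr (1 + \<delta>) \<le> (real (stage_supp s) + 1) powr (1 + \<delta>)"
      using assms(1) \<delta> by (intro powr_mono2) auto
    also have "\<dots> \<le> (real (stage_supp s) + 1) powr 2" using \<delta> by (intro powr_mono) auto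
    also have "\<dots> = (real (stage_supp s) + 1)\<^sup>2" by (simp add: powr_realpow)
    finally show ?thesis using stage_bound_ge_1[of s] by (intro mult_right_mono mult_left_mono) auto
  qed
  finally show ?thesis by (simp add: \<delta>_def)
qed

lemma decay_le_1: "real (k + 1) powr -(1 + stage_delta s) \<le> 1"
proof -
  have "1 \<le> real (k + 1) powr (1 + stage_delta s)"
    using stage_delta_pos[of s] by (intro ge_one_powr_ge_zero) auto
  then show ?thesis unfolding powr_minus_divide by simp
qed

lemma stage_const_base_ge_1: "1 \<le> 2 * stage_bound s * (real (stage_supp s) + 1)\<^sup>2"
proof -
  have "1 \<le> (real (stage_supp s) + 1)\<^sup>2" by simp
  then show ?thesis using stage_bound_ge_1[of s] by (smt (verit) mult_le_cancel_right1 mult_mono)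
qed

lemma norm_seed_powr_le:
  assumes "in_region s r m"
  shows "norm (seed m) powr p \<le> stage_const s * real (m + 1) powr -(1 + stage_delta s)"
proof (cases "seed m = 0")
  case True
  then show ?thesis using stage_const_pos[of s] p_pos by simp
next
  case False
  define \<mu> where "\<mu> = sweep_mu s (stage_start s) r"
  define \<delta> where "\<delta> = stage_delta s"
  obtain i k where ik: "m = region_start s r + i * stage_period s + k" "k < stage_supp s"
    "seed m = stage_pattern s k / of_real (bws_weight \<mu> k (region_start s r + i * stage_period s))"
    using region_value_nonzero[of s r m] False assms unfolding seed_in_region(1)[OF assms] \<mu>_def
    by metis
  define n where "n = region_start s r + i * stage_period s"
  have \<delta>: "0 \<le> \<delta>" "\<delta> \<le> 1" using stage_delta_pos[of s] stage_delta_le[of s] by (simp_all add: \<delta>_def)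
  have W_ge: "(real (m + 1) / real (k + 2)) powr (1 + \<delta>) \<le> bws_weight \<mu> k n"
    using bws_weight_ge_ratio_powr[OF \<delta>, of \<mu> k n] sweep_mu_ge[of s "stage_start s" r] ik(1)
    by (simp add: \<mu>_def \<delta>_def n_def add.commute)
  have "norm (seed m) = norm (stage_pattern s k) / bws_weight \<mu> k n"
    using ik(3) bws_weight_pos[OF sweep_mu_nonneg, of s "stage_start s" r k n]
    by (simp add: n_def \<mu>_def norm_divide)
  also have "\<dots> \<le> stage_bound s / (real (m + 1) / real (k + 2)) powr (1 + \<delta>)"
    using W_ge norm_stage_pattern_le[of s k] stage_bound_ge_1[of s]
    by (intro frac_le) (auto intro: order_trans[OF zero_le_one])
  also have "\<dots> \<le> stage_bound s * (real (stage_supp s) + 1)\<^sup>2 * real (m + 1) powr -(1 + \<delta>)"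
    using pattern_decay_le[OF ik(2), of m] ik(1) by (simp add: \<delta>_def)
  also have "\<dots> \<le> 2 * stage_bound s * (real (stage_supp s) + 1)\<^sup>2 * real (m + 1) powr -(1 + \<delta>)"
    using stage_bound_ge_1[of s] by (intro mult_right_mono) auto
  finally show ?thesis
    unfolding stage_const_def using powr_le_mult_powr[OF p_ge_1] stage_const_base_ge_1[of s]
      decay_le_1[of m s] by (simp add: \<delta>_def)
qed

lemma seed_lp: "seed \<in> lp p"
proof (rule lpI, rule summableI_nonneg_bounded[where x = 2])
  fix N
  define h where "h s m = (if 2 ^ stage_start s \<le> m
    then stage_const s * real (m + 1) powr -(1 + stage_delta s) else 0)" for s m
  have h_nonneg: "h s m \<ge> 0" for s m using stage_const_pos[of s] by (simp add: h_def)
  have "norm (seed m) powr p \<le> (\<Sum>s<N. h s m)" if "m < N" for m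
  proof (cases "\<exists>s r. in_region s r m")
    case True
    then obtain s r where sr: "in_region s r m" by blast
    have "s < 2 ^ stage_start s" using stage_start_ge[of s] less_exp[of "stage_start s"] by linarith
    then have "s < N" using in_region_stage_bounds(1)[OF sr] that by simp
    have "norm (seed m) powr p \<le> h s m"
      using norm_seed_powr_le[OF sr] in_region_stage_bounds(1)[OF sr] by (simp add: h_def)
    also have "\<dots> \<le> (\<Sum>s<N. h s m)" using \<open>s < N\<close> h_nonneg by (intro member_le_sum) auto
    finally show ?thesis .
  qed (use seed_outside[of m] p_pos h_nonneg in \<open>simp add: sum_nonneg\<close>)
  then have "(\<Sum>m<N. norm (seed m) powr p) \<le> (\<Sum>m<N. \<Sum>s<N. h s m)"
    by (intro sum_mono) simp
  also have "\<dots> = (\<Sum>s<N. \<Sum>m<N. h s m)" by (rule sum.swap)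
  also have "\<dots> \<le> (\<Sum>s<N. (1/2) ^ s)"
  proof (rule sum_mono)
    fix s
    have "(\<Sum>m<N. h s m) = stage_const s * (\<Sum>m\<in>{2 ^ stage_start s..<N}. real (m + 1) powr -(1 + stage_delta s))"
      unfolding h_def sum_distrib_left by (rule sum.mono_neutral_cong_right) auto
    also have "\<dots> \<le> stage_const s * zeta_tail (stage_delta s) (2 ^ stage_start s)"
      using stage_const_pos[of s] by (intro mult_left_mono sum_le_zeta_tail stage_delta_pos) auto
    also have "\<dots> \<le> (1/2) ^ s" using stage_start_ok[of s] by (simp add: stage_start_ok_def)
    finally show "(\<Sum>m<N. h s m) \<le> (1/2) ^ s" .
  qed
  also have "\<dots> \<le> 2" using sum_gp_strict[of "1/2::real" N] by simp
  finally show "(\<Sum>m<N. norm (seed m) powr p) \<le> 2" .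
qed auto

lemma seed_support_before_next_stage:
  assumes "seed m \<noteq> 0" "m < 2 ^ stage_start (Suc s)"
  shows "m < 2 ^ (stage_start s + stage_regions s)"
proof -
  obtain s' r' where reg: "in_region s' r' m" using assms(1) seed_outside by blast
  note bounds = in_region_stage_bounds[OF reg]
  consider "s < s'" | "s' = s" | "s' < s" by linarith
  then show ?thesis
  proof cases
    case 1
    then have "stage_start (Suc s) \<le> stage_start s'"
      using stage_start_less[of "Suc s" s'] by (cases "Suc s = s'") auto
    then have "(2::nat) ^ stage_start (Suc s) \<le> 2 ^ stage_start s'" by (intro power_increasing) auto
    then show ?thesis using bounds assms by linarith
  next
    case 3
    then have "(2::nat) ^ (stage_start s' + stage_regions s') \<le> 2 ^ (stage_start s + stage_regions s)"
      using stage_start_less[of s' s] by (intro power_increasing) auto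
    then show ?thesis using bounds by linarith
  qed (use bounds in simp)
qed

lemma in_region_near:
  assumes "in_region s' r' m" "r < stage_regions s" "region_start s r \<le> m" "m < 4 * region_start s r"
  shows "s' = s" "r' = r \<or> r' = Suc r"
proof -
  have lo: "2 ^ (stage_start s + r) \<le> m" and hi: "m < 2 ^ (stage_start s + r + 2)"
    using assms(3,4) by (simp_all add: region_start_def power_add)
  note bounds = in_region_stage_bounds[OF assms(1)]
  show "s' = s"
  proof (rule ccontr)
    assume "s' \<noteq> s"
    then consider "s' < s" | "s < s'" by linarith
    then show False
    proof cases
      case 1
      then have "(2::nat) ^ (stage_start s' + stage_regions s') \<le> 2 ^ (stage_start s + r)"
        using stage_start_less[of s' s] by (intro power_increasing) auto
      then show False using bounds lo by linarith
    next
      case 2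
      then have "(2::nat) ^ (stage_start s + r + 2) \<le> 2 ^ stage_start s'"
        using stage_start_less[of s s'] assms(2) by (intro power_increasing) auto
      then show False using bounds hi by linarith
    qed
  qed
  then have lo': "2 ^ (stage_start s + r') \<le> m" and hi': "m < 2 ^ (stage_start s + r' + 1)"
    using assms(1) by (auto simp: in_region_def region_start_def)
  show "r' = r \<or> r' = Suc r"
  proof (rule ccontr)
    assume "\<not> (r' = r \<or> r' = Suc r)"
    then consider "r' < r" | "r + 2 \<le> r'" by linarith
    then show False
    proof cases
      case 1
      then have "(2::nat) ^ (stage_start s + r' + 1) \<le> 2 ^ (stage_start s + r)" by (intro power_increasing) auto
      then show False using lo hi' by linarith
    next
      case 2
      then have "(2::nat) ^ (stage_start s + r + 2) \<le> 2 ^ (stage_start s + r')" by (intro power_increasing) auto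
      then show False using lo' hi by linarith
    qed
  qed
qed

definition class_multiples :: "(nat \<Rightarrow> 'a) set" where
  "class_multiples = {z \<in> lp p. \<exists>c. \<forall>m. z m = c (class_of m) * seed m}"

lemma class_multiples_subspace: "seq_subspace class_multiples"
  unfolding seq_subspace_def
proof (intro conjI ballI allI)
  show "(\<lambda>n. 0) \<in> class_multiples"
    unfolding class_multiples_def using lp_eventually_zero[of 0 "\<lambda>_. 0" p] p_pos by auto
next
  fix x y assume "x \<in> class_multiples" "y \<in> class_multiples"
  then obtain c d where "x \<in> lp p" "y \<in> lp p" "\<forall>m. x m = c (class_of m) * seed m"
    "\<forall>m. y m = d (class_of m) * seed m"
    by (auto simp: class_multiples_def)
  then show "(\<lambda>n. x n + y n) \<in> class_multiples"
    unfolding class_multiples_def using lp_add[of x p y] p_pos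
    by (auto intro!: exI[of _ "\<lambda>k. c k + d k"] simp: algebra_simps)
next
  fix a x assume "x \<in> class_multiples"
  then obtain c where "x \<in> lp p" "\<forall>m. x m = c (class_of m) * seed m"
    by (auto simp: class_multiples_def)
  then show "(\<lambda>n. a * x n) \<in> class_multiples"
    unfolding class_multiples_def using lp_scale[of x p a]
    by (auto intro!: exI[of _ "\<lambda>k. a * c k"] simp: algebra_simps)
qed

lemma not_in_class_multiples:
  assumes "z \<in> lp p" "z \<notin> class_multiples"
  shows "(\<exists>m. seed m = 0 \<and> z m \<noteq> 0) \<or>
    (\<exists>m1 m2. class_of m1 = class_of m2 \<and> seed m2 * z m1 + - seed m1 * z m2 \<noteq> 0)"
proof (rule ccontr)
  assume "\<not> ?thesis"
  then have zero: "\<And>m. seed m = 0 \<Longrightarrow> z m = 0"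
    and proportional: "\<And>m1 m2. class_of m1 = class_of m2 \<Longrightarrow> z m1 * seed m2 = z m2 * seed m1"
    by (auto simp: algebra_simps)
  define rep where "rep k = (SOME m. class_of m = k \<and> seed m \<noteq> 0)" for k
  define c where "c k = z (rep k) / seed (rep k)" for k
  have "z m = c (class_of m) * seed m" for m
  proof (cases "seed m = 0")
    case False
    then have "class_of (rep (class_of m)) = class_of m" "seed (rep (class_of m)) \<noteq> 0"
      unfolding rep_def by (metis (mono_tags, lifting) someI_ex)+
    with proportional[of m "rep (class_of m)"] show ?thesis by (simp add: c_def field_simps)
  qed (simp add: zero)
  then show False using assms by (auto simp: class_multiples_def)
qed

lemma class_multiples_closed: "lp_closed p class_multiples"
proof -
  define S where "S = (\<lambda>(m1, m2). {y \<in> lp p. seed m2 * y m1 + - seed m1 * y m2 \<noteq> 0})"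
  define T :: "nat \<Rightarrow> (nat \<Rightarrow> 'a) set" where "T m = {y \<in> lp p. y m \<noteq> 0}" for m
  define F where "F = S ` {(m1, m2). class_of m1 = class_of m2} \<union> T ` {m. seed m = 0}"
  have "z \<in> \<Union>F" if "z \<in> lp p" "z \<notin> class_multiples" for z
    using not_in_class_multiples[OF that] that(1) unfolding F_def S_def T_def by fastforce
  moreover have "z \<notin> class_multiples" if "z \<in> \<Union>F" for z
  proof
    assume "z \<in> class_multiples"
    then obtain c where c: "\<And>m. z m = c (class_of m) * seed m" by (auto simp: class_multiples_def)
    from that show False by (auto simp: F_def S_def T_def c algebra_simps)
  qed
  moreover have "\<Union>F \<subseteq> lp p" by (auto simp: F_def S_def T_def)
  ultimately have complement: "lp p - class_multiples = \<Union>F" by blast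
  have "lp_open p (T m)" for m
    using lp_open_coord_combination_nonzero[OF p_pos, of 1 m 0 m] by (simp add: T_def)
  moreover have "lp_open p (S (m1, m2))" for m1 m2
    unfolding S_def case_prod_conv by (rule lp_open_coord_combination_nonzero[OF p_pos])
  ultimately have "lp_open p (\<Union>F)" by (intro lp_open_Union) (auto simp: F_def)
  moreover have "class_multiples \<subseteq> lp p" by (auto simp: class_multiples_def)
  ultimately show ?thesis by (simp add: lp_closed_def complement)
qed

lemma class_has_seed: "\<exists>m. class_of m = i \<and> seed m \<noteq> 0"
proof -
  define y :: "nat \<Rightarrow> 'a" where "y k = (if k = 0 then 1 else 0)" for k
  have "y \<in> finite_patterns D"
    unfolding finite_patterns_def y_def using zero_in_D one_in_D by (auto intro!: exI[of _ 1])
  then obtain j where j: "pattern j = y" using pattern_surj by blast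
  obtain s where s: "stage_code s = (i, j, 0, 0)" using stage_code_frequently by blast
  define b where "b = region_start s 0"
  have copy: "seed (b + 0) = stage_pattern s 0 / of_real (bws_weight (sweep_mu s (stage_start s) 0) 0 b)"
    "class_of (b + 0) = stage_class s"
    using seed_copy[of 0 s b 0 0] sweep_length_pos[of s] region_start_ge[of s 0] stage_supp_pos[of s]
    by (simp_all add: b_def)
  moreover have "stage_pattern s 0 = 1" using j s by (simp add: stage_pattern_def y_def)
  moreover have "bws_weight (sweep_mu s (stage_start s) 0) 0 b > 0"
    using bws_weight_pos[OF sweep_mu_nonneg] by blast
  ultimately show ?thesis using s by (intro exI[of _ b]) (simp add: stage_class_def)
qed

lemma class_multiples_infinite_dim: "infinite_dim class_multiples"
  unfolding infinite_dim_def
proof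
  fix k
  define v where "v i m = (if class_of m = i then seed m else 0)" for i m
  have "v i \<in> class_multiples" for i
  proof -
    have "v i \<in> lp p"
      by (intro lpI summable_comparison_test[OF _ lp_summable[OF seed_lp]]) (auto simp: v_def)
    then show ?thesis
      unfolding class_multiples_def by (auto intro!: exI[of _ "\<lambda>k. if k = i then 1 else 0"] simp: v_def)
  qed
  moreover have "seq_lin_indep k v"
    unfolding seq_lin_indep_def
  proof (intro allI impI)
    fix c i assume sum0: "(\<lambda>n. \<Sum>i<k. c i * v i n) = (\<lambda>n. 0)" and "i < k"
    obtain m where m: "class_of m = i" "seed m \<noteq> 0" using class_has_seed by blast
    have "(\<Sum>i'<k. c i' * v i' m) = (\<Sum>i'\<in>{i}. c i' * v i' m)"
      by (rule sum.mono_neutral_right) (use \<open>i < k\<close> m in \<open>auto simp: v_def\<close>)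
    moreover have "(\<Sum>i'<k. c i' * v i' m) = 0" using sum0 by metis
    ultimately have "c i * seed m = 0" using m by (simp add: v_def)
    then show "c i = 0" using m by simp
  qed
  ultimately show "\<exists>v. (\<forall>i<k. v i \<in> class_multiples) \<and> seq_lin_indep k v" by blast
qed


definition copy_start :: "nat \<Rightarrow> nat \<Rightarrow> nat \<Rightarrow> bool" where
  "copy_start s r n \<longleftrightarrow> r < stage_regions s \<and> (\<exists>i. n = region_start s r + i * stage_period s) \<and>
     n + stage_period s \<le> 2 * region_start s r"

definition region_serves :: "nat \<Rightarrow> nat \<Rightarrow> real \<Rightarrow> bool" where
  "region_serves s r \<mu> \<longleftrightarrow> sweep_mu s (stage_start s) r \<le> \<mu> \<and> \<mu> \<le> sweep_mu s (stage_start s) (Suc r)"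

lemma copy_start_bounds:
  assumes "copy_start s r n"
  shows "region_start s r \<le> n" "n + stage_period s \<le> 2 * region_start s r" "stage_supp s \<le> n"
proof -
  show "region_start s r \<le> n" "n + stage_period s \<le> 2 * region_start s r"
    using assms by (auto simp: copy_start_def)
  then show "stage_supp s \<le> n" using region_start_ge[of s r] stage_period(1)[of s] by linarith
qed

lemma bws_weight_near_copy_le:
  assumes "copy_start s r n" "region_serves s r \<mu>" "r' = r \<or> r' = Suc r" "k < n"
  shows "bws_weight \<mu> k n \<le> (1 + stage_eps s) * bws_weight (sweep_mu s (stage_start s) r') k n"
proof -
  define \<mu>' where "\<mu>' = sweep_mu s (stage_start s) r'"
  have "\<mu>' \<ge> 0" by (simp add: \<mu>'_def sweep_mu_nonneg)
  have "\<mu> \<ge> 0" using assms(2) sweep_mu_nonneg[of s "stage_start s" r] by (simp add: region_serves_def)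
  have "bws_weight \<mu> k n \<le> (1 + stage_eps s) * bws_weight \<mu>' k n"
  proof (cases "\<mu> \<le> \<mu>'")
    case True
    then have "bws_weight \<mu> k n \<le> bws_weight \<mu>' k n" by (rule bws_weight_mono[OF \<open>\<mu> \<ge> 0\<close>])
    also have "bws_weight \<mu>' k n \<le> (1 + stage_eps s) * bws_weight \<mu>' k n"
      using bws_weight_pos[OF \<open>\<mu>' \<ge> 0\<close>, of k n] stage_eps_pos[of s] by (simp add: mult_le_cancel_right1)
    finally show ?thesis .
  next
    case False
    then have "r' = r" using assms(2,3) by (auto simp: \<mu>'_def region_serves_def)
    show ?thesis
    proof (rule bws_weight_perturb_le[OF \<open>\<mu>' \<ge> 0\<close>])
      show "\<mu>' \<le> \<mu>" "\<mu> \<le> \<mu>' + stage_eps s / 3 / real (stage_start s + r + 2)"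
        using False assms(2) \<open>r' = r\<close>
        by (simp_all add: \<mu>'_def region_serves_def sweep_mu_Suc add.commute add.left_commute)
      have "k + n < 4 * region_start s r" using assms(4) copy_start_bounds(2)[OF assms(1)] by linarith
      then show "k + n \<le> 2 ^ (stage_start s + r + 2)" by (simp add: region_start_def power_add)
      show "1 \<le> k + n" using copy_start_bounds(3)[OF assms(1)] stage_supp_pos[of s] by linarith
    qed (use stage_eps_pos stage_eps_le_1 in auto)
  qed
  then show ?thesis by (simp add: \<mu>'_def)
qed

lemma orbit_coord_near:
  assumes z: "\<And>m. z m = c (class_of m) * seed m" and "copy_start s r n" "region_serves s r \<mu>"
    and "k < stage_supp s"
  shows "norm ((bws \<mu> ^^ n) z k - c (stage_class s) * stage_pattern s k)
    \<le> norm (c (stage_class s)) * stage_bound s * stage_eps s"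
proof -
  define \<mu>0 where "\<mu>0 = sweep_mu s (stage_start s) r"
  define C where "C = c (stage_class s)"
  obtain i where r: "r < stage_regions s" and n: "n = region_start s r + i * stage_period s"
    and "n + stage_period s \<le> 2 * region_start s r"
    using assms(2) by (auto simp: copy_start_def)
  then have copy: "seed (n + k) = stage_pattern s k / of_real (bws_weight \<mu>0 k n)"
    "class_of (n + k) = stage_class s"
    using seed_copy[OF r n _ assms(4)] by (auto simp: \<mu>0_def)
  have "\<mu>0 \<ge> 0" by (simp add: \<mu>0_def sweep_mu_nonneg)
  have W_pos: "bws_weight \<mu>0 k n > 0" using bws_weight_pos[OF \<open>\<mu>0 \<ge> 0\<close>] .
  have W_ge: "bws_weight \<mu>0 k n \<le> bws_weight \<mu> k n"
    using bws_weight_mono[OF \<open>\<mu>0 \<ge> 0\<close>] assms(3) by (simp add: \<mu>0_def region_serves_def)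
  have W_le: "bws_weight \<mu> k n \<le> (1 + stage_eps s) * bws_weight \<mu>0 k n"
    using bws_weight_near_copy_le[OF assms(2,3), of r k] assms(4) copy_start_bounds(3)[OF assms(2)]
    by (simp add: \<mu>0_def)
  have "z (k + n) = C * (stage_pattern s k / of_real (bws_weight \<mu>0 k n))"
    using z[of "n + k"] copy by (simp add: C_def add.commute)
  then have "(bws \<mu> ^^ n) z k - C * stage_pattern s k
      = C * stage_pattern s k * of_real (bws_weight \<mu> k n / bws_weight \<mu>0 k n - 1)"
    using W_pos by (simp add: bws_iterate field_simps)
  then have "norm ((bws \<mu> ^^ n) z k - C * stage_pattern s k)
      = norm C * norm (stage_pattern s k) * \<bar>bws_weight \<mu> k n / bws_weight \<mu>0 k n - 1\<bar>"
    by (simp only: norm_mult norm_of_real)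
  also have "\<dots> \<le> norm C * stage_bound s * stage_eps s"
  proof (intro mult_mono)
    show "\<bar>bws_weight \<mu> k n / bws_weight \<mu>0 k n - 1\<bar> \<le> stage_eps s"
      using W_ge W_le W_pos by (auto simp: field_simps abs_le_iff)
  qed (use norm_stage_pattern_le stage_bound_ge_1[of s] in \<open>auto intro: mult_left_mono\<close>)
  finally show ?thesis by (simp add: C_def)
qed

lemma seed_after_copy:
  assumes "copy_start s r n" "stage_supp s \<le> k" "k < n" "seed (n + k) \<noteq> 0"
  obtains r' n' k' where "r' = r \<or> r' = Suc r" "copy_start s r' n'" "k' < stage_supp s"
    "stage_period s + k' \<le> k" "n + k = n' + k'" "class_of (n + k) = stage_class s"
    "seed (n + k) = stage_pattern s k' / of_real (bws_weight (sweep_mu s (stage_start s) r') k' n')"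
proof -
  obtain s' r' where reg: "in_region s' r' (n + k)" using assms(4) seed_outside by blast
  obtain i where r: "r < stage_regions s" and n: "n = region_start s r + i * stage_period s"
    and n_le: "n + stage_period s \<le> 2 * region_start s r"
    using assms(1) by (auto simp: copy_start_def)
  have "n + k < 4 * region_start s r" using assms(3) n_le by linarith
  with in_region_near[OF reg r] n have "s' = s" and r': "r' = r \<or> r' = Suc r" by auto
  with reg have reg: "in_region s r' (n + k)" by simp
  obtain i' k' where m: "n + k = region_start s r' + i' * stage_period s + k'" and "k' < stage_supp s"
    and n'_le: "region_start s r' + i' * stage_period s + stage_period s \<le> 2 * region_start s r'"
    and val: "region_value s r' (n + k) = stage_pattern s k' /
       of_real (bws_weight (sweep_mu s (stage_start s) r') k' (region_start s r' + i' * stage_period s))"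
    using region_value_nonzero[OF _ reg] assms(4) seed_in_region(1)[OF reg] by metis
  define n' where "n' = region_start s r' + i' * stage_period s"
  have "copy_start s r' n'"
    using reg n'_le by (auto simp: copy_start_def in_region_def n'_def)
  have "n + stage_period s \<le> n'"
    using r'
  proof
    assume "r' = r"
    then have "i' * stage_period s + k' = i * stage_period s + k" using m n by simp
    moreover have "k' < k" using \<open>k' < stage_supp s\<close> assms(2) by simp
    ultimately have "i * stage_period s < i' * stage_period s" by linarith
    then have "i < i'" by (simp add: mult_less_cancel2)
    then have "(i + 1) * stage_period s \<le> i' * stage_period s" by (intro mult_right_mono) auto
    then show ?thesis using \<open>r' = r\<close> n by (simp add: n'_def algebra_simps)
  next
    assume "r' = Suc r"
    then show ?thesis using n_le by (simp add: n'_def region_start_Suc)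
  qed
  then have "stage_period s + k' \<le> k" using m by (simp add: n'_def)
  show thesis
    using that[OF r' \<open>copy_start s r' n'\<close> \<open>k' < stage_supp s\<close> \<open>stage_period s + k' \<le> k\<close>]
      m seed_in_region[OF reg] val by (simp add: n'_def)
qed

lemma bws_weight_after_copy_le:
  assumes "copy_start s r n" "region_serves s r \<mu>" "r' = r \<or> r' = Suc r" "k < n"
    and "k' \<le> k" "n + k = n' + k'"
  shows "bws_weight \<mu> k n \<le> 2 * bws_weight (sweep_mu s (stage_start s) r') k' n' /
    (real (k + 1) / real (k' + 2)) powr (1 + stage_delta s)"
proof -
  define \<mu>' where "\<mu>' = sweep_mu s (stage_start s) r'"
  define P where "P = bws_weight \<mu>' k' (k - k')"
  have "\<mu>' \<ge> 0" "\<mu>' \<ge> 1 + stage_delta s" by (simp_all add: \<mu>'_def sweep_mu_nonneg sweep_mu_ge)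
  have split: "bws_weight \<mu>' k' n' = P * bws_weight \<mu>' k n"
    using bws_weight_add[of \<mu>' k' "k - k'" n] assms(5,6) by (simp add: P_def add.commute)
  have ratio: "(real (k + 1) / real (k' + 2)) powr (1 + stage_delta s) \<le> P"
    using bws_weight_ge_ratio_powr[of "stage_delta s" \<mu>' k' "k - k'"] stage_delta_pos[of s]
      stage_delta_le[of s] \<open>\<mu>' \<ge> 1 + stage_delta s\<close> assms(5) by (simp add: P_def)
  have "0 < (real (k + 1) / real (k' + 2)) powr (1 + stage_delta s)" by simp
  have "P > 0" unfolding P_def by (rule bws_weight_pos[OF \<open>\<mu>' \<ge> 0\<close>])
  have "bws_weight \<mu> k n \<le> (1 + stage_eps s) * bws_weight \<mu>' k n"
    using bws_weight_near_copy_le[OF assms(1-4)] by (simp add: \<mu>'_def)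
  also have "\<dots> \<le> 2 * bws_weight \<mu>' k n"
    using stage_eps_le_1[of s] bws_weight_pos[OF \<open>\<mu>' \<ge> 0\<close>, of k n] by (intro mult_right_mono) auto
  also have "\<dots> = 2 * bws_weight \<mu>' k' n' / P"
    using split bws_weight_pos[OF \<open>\<mu>' \<ge> 0\<close>, of k' "k - k'"] by (simp add: P_def)
  also have "\<dots> \<le> 2 * bws_weight \<mu>' k' n' / (real (k + 1) / real (k' + 2)) powr (1 + stage_delta s)"
    using ratio bws_weight_pos[OF \<open>\<mu>' \<ge> 0\<close>, of k' n'] \<open>P > 0\<close>
      \<open>0 < (real (k + 1) / real (k' + 2)) powr (1 + stage_delta s)\<close>
    by (intro divide_left_mono) auto
  finally show ?thesis by (simp add: \<mu>'_def)
qed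

lemma orbit_coord_far:
  assumes z: "\<And>m. z m = c (class_of m) * seed m" and copy: "copy_start s r n"
    and serves: "region_serves s r \<mu>" and k: "stage_supp s \<le> k" "k < n"
  shows "norm ((bws \<mu> ^^ n) z k) powr p \<le> norm (c (stage_class s)) powr p *
    (stage_const s * (if stage_period s \<le> k then real (k + 1) powr -(1 + stage_delta s) else 0))"
proof (cases "seed (n + k) = 0")
  case True
  then show ?thesis using stage_const_pos[of s] p_pos by (simp add: bws_iterate z add.commute)
next
  case False
  define C where "C = c (stage_class s)"
  obtain r' n' k' where r': "r' = r \<or> r' = Suc r" and "copy_start s r' n'" and "k' < stage_supp s"
    and kk': "stage_period s + k' \<le> k" and m: "n + k = n' + k'"
    and cls: "class_of (n + k) = stage_class s"
    and val: "seed (n + k) = stage_pattern s k' / of_real (bws_weight (sweep_mu s (stage_start s) r') k' n')"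
    by (rule seed_after_copy[OF copy k False])
  define W' where "W' = bws_weight (sweep_mu s (stage_start s) r') k' n'"
  have "W' > 0" unfolding W'_def by (intro bws_weight_pos sweep_mu_nonneg)
  have "norm ((bws \<mu> ^^ n) z k) = bws_weight \<mu> k n * norm C * norm (stage_pattern s k') / W'"
    using z[of "n + k"] cls val \<open>W' > 0\<close> bws_weight_pos[of \<mu> k n] serves
      sweep_mu_nonneg[of s "stage_start s" r]
    by (simp add: bws_iterate C_def W'_def norm_mult norm_divide add.commute region_serves_def)
  also have "\<dots> \<le> 2 * W' / (real (k + 1) / real (k' + 2)) powr (1 + stage_delta s) * norm C * stage_bound s / W'"
    using bws_weight_after_copy_le[OF copy serves r' k(2), of k' n'] kk' m norm_stage_pattern_le[of s k'] \<open>W' > 0\<close>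
    by (intro divide_right_mono mult_mono) (auto simp: W'_def)
  also have "\<dots> = 2 * norm C * (stage_bound s / (real (k + 1) / real (k' + 2)) powr (1 + stage_delta s))"
    using \<open>W' > 0\<close> by (simp add: field_simps)
  also have "\<dots> \<le> 2 * norm C * (stage_bound s * (real (stage_supp s) + 1)\<^sup>2 * real (k + 1) powr -(1 + stage_delta s))"
    using pattern_decay_le[OF \<open>k' < stage_supp s\<close>, of k] kk' by (intro mult_left_mono) auto
  finally have "norm ((bws \<mu> ^^ n) z k)
      \<le> (norm C * (2 * stage_bound s * (real (stage_supp s) + 1)\<^sup>2)) * real (k + 1) powr -(1 + stage_delta s)"
    by (simp add: algebra_simps)
  then have "norm ((bws \<mu> ^^ n) z k) powr p
      \<le> (norm C * (2 * stage_bound s * (real (stage_supp s) + 1)\<^sup>2)) powr p * real (k + 1) powr -(1 + stage_delta s)"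
    using stage_const_base_ge_1[of s] decay_le_1[of k s] by (intro powr_le_mult_powr p_ge_1) auto
  then show ?thesis
    using kk' stage_const_base_ge_1[of s] by (simp add: stage_const_def C_def powr_mult)
qed

lemma orbit_gap_sum_le:
  assumes z: "\<And>m. z m = c (class_of m) * seed m"
    and copy: "copy_start s r n" and serves: "region_serves s r \<mu>"
  shows "(\<Sum>k\<in>{stage_supp s..<n}. norm ((bws \<mu> ^^ n) z k) powr p) \<le> norm (c (stage_class s)) powr p * stage_eps s"
proof -
  define C where "C = c (stage_class s)"
  define X where "X k = real (k + 1) powr -(1 + stage_delta s)" for k
  have filter: "(\<Sum>k\<in>{stage_supp s..<n}. if stage_period s \<le> k then X k else 0) = (\<Sum>k\<in>{stage_period s..<n}. X k)"
  proof -
    have "(\<Sum>k\<in>{stage_supp s..<n}. if stage_period s \<le> k then X k else 0)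
        = sum X {k \<in> {stage_supp s..<n}. stage_period s \<le> k}"
      by (rule sum.inter_filter[symmetric]) simp
    also have "{k \<in> {stage_supp s..<n}. stage_period s \<le> k} = {stage_period s..<n}"
      using stage_period(1)[of s] by auto
    finally show ?thesis .
  qed
  have "(\<Sum>k\<in>{stage_supp s..<n}. norm ((bws \<mu> ^^ n) z k) powr p)
      \<le> (\<Sum>k\<in>{stage_supp s..<n}. norm C powr p * (stage_const s * (if stage_period s \<le> k then X k else 0)))"
  proof (rule sum_mono)
    fix k assume "k \<in> {stage_supp s..<n}"
    then show "norm ((bws \<mu> ^^ n) z k) powr p
        \<le> norm C powr p * (stage_const s * (if stage_period s \<le> k then X k else 0))"
      unfolding C_def X_def by (intro orbit_coord_far[OF z copy serves]) auto
  qed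
  also have "\<dots> = norm C powr p * (stage_const s * (\<Sum>k\<in>{stage_period s..<n}. X k))"
    by (simp only: sum_distrib_left[symmetric] filter)
  also have "\<dots> \<le> norm C powr p * (stage_const s * zeta_tail (stage_delta s) (stage_period s))"
    unfolding X_def using stage_const_pos[of s]
    by (intro mult_left_mono sum_le_zeta_tail stage_delta_pos) auto
  also have "\<dots> \<le> norm C powr p * stage_eps s" using stage_period(2) by (simp add: mult_left_mono)
  finally show ?thesis by (simp add: C_def)
qed

lemma lp_sum_orbit_minus_pattern_le:
  assumes "z \<in> lp p" and z: "\<And>m. z m = c (class_of m) * seed m"
    and copy: "copy_start s r n" and serves: "region_serves s r \<mu>"
  shows "lp_sum p (\<lambda>k. (bws \<mu> ^^ n) z k - c (stage_class s) * stage_pattern s k)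
    \<le> real (stage_supp s) * (norm (c (stage_class s)) * stage_bound s * stage_eps s) powr p
      + norm (c (stage_class s)) powr p * stage_eps s
      + (2 powr \<mu>) powr p * (\<Sum>i. norm (z (i + 2 * n)) powr p)"
proof -
  define C where "C = c (stage_class s)"
  define J where "J = stage_supp s"
  define f where "f k = norm ((bws \<mu> ^^ n) z k - C * stage_pattern s k) powr p" for k
  have "\<mu> \<ge> 0" using serves sweep_mu_nonneg[of s "stage_start s" r] by (simp add: region_serves_def)
  have "J \<le> n" using copy_start_bounds(3)[OF copy] by (simp add: J_def)
  have "n \<ge> 1" using \<open>J \<le> n\<close> stage_supp_pos[of s] by (simp add: J_def)
  have "(\<lambda>k. C * stage_pattern s k) \<in> lp p"
    using stage_pattern_zero p_pos by (intro lp_eventually_zero[of "stage_supp s"]) auto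
  then have "summable f"
    unfolding f_def using lp_summable[OF lp_diff[OF bws_iterate_lp[OF \<open>\<mu> \<ge> 0\<close> assms(1) p_pos]]] p_pos
    by simp
  then have split: "lp_sum p (\<lambda>k. (bws \<mu> ^^ n) z k - C * stage_pattern s k)
      = (\<Sum>i. f (i + n)) + (\<Sum>k<J. f k) + (\<Sum>k\<in>{J..<n}. f k)"
    unfolding lp_sum_def f_def[symmetric] using \<open>J \<le> n\<close>
    by (simp add: suminf_split_initial_segment[of f n] lessThan_atLeast0 sum.atLeastLessThan_concat)
  have "(\<Sum>i. f (i + n)) = (\<Sum>i. norm ((bws \<mu> ^^ n) z (i + n)) powr p)"
    using stage_pattern_zero[of s] \<open>J \<le> n\<close> by (simp add: f_def J_def)
  also have "\<dots> \<le> (2 powr \<mu>) powr p * (\<Sum>i. norm (z (i + 2 * n)) powr p)"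
    by (rule bws_iterate_tail_le[OF \<open>\<mu> \<ge> 0\<close> \<open>n \<ge> 1\<close> assms(1) p_pos])
  finally have tail: "(\<Sum>i. f (i + n)) \<le> (2 powr \<mu>) powr p * (\<Sum>i. norm (z (i + 2 * n)) powr p)" .
  have "f k \<le> (norm C * stage_bound s * stage_eps s) powr p" if "k < J" for k
    unfolding f_def C_def using orbit_coord_near[OF z copy serves] that p_pos
    by (intro powr_mono2) (auto simp: J_def)
  then have near: "(\<Sum>k<J. f k) \<le> real J * (norm C * stage_bound s * stage_eps s) powr p"
    using sum_mono[of "{..<J}" f "\<lambda>_. (norm C * stage_bound s * stage_eps s) powr p"] by simp
  have "(\<Sum>k\<in>{J..<n}. f k) = (\<Sum>k\<in>{J..<n}. norm ((bws \<mu> ^^ n) z k) powr p)"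
    using stage_pattern_zero[of s] by (intro sum.cong) (auto simp: f_def J_def)
  then have far: "(\<Sum>k\<in>{J..<n}. f k) \<le> norm C powr p * stage_eps s"
    using orbit_gap_sum_le[OF z copy serves] by (simp add: C_def J_def)
  show ?thesis using split tail near far by (simp add: C_def J_def)
qed

lemma lower_density_seed_support:
  assumes "A \<subseteq> {m. seed m \<noteq> 0}"
  shows "lower_density A \<le> 0"
proof (rule lower_density_le_0I)
  fix \<epsilon> :: real and N0 :: nat
  assume "\<epsilon> > 0"
  then obtain n0 where n0: "(1/2::real) ^ n0 < \<epsilon>" using real_arch_pow_inv[of \<epsilon> "1/2"] by auto
  define s where "s = max N0 n0"
  define e where "e = stage_start s + stage_regions s"
  define N where "N = 2 ^ stage_start (Suc s) - (1::nat)"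
  have N1: "N + 1 = 2 ^ stage_start (Suc s)" by (simp add: N_def)
  have "N0 \<le> s" by (simp add: s_def)
  also have "s < stage_start (Suc s)" using stage_start_ge[of "Suc s"] by simp
  also have "stage_start (Suc s) < 2 ^ stage_start (Suc s)" by (rule less_exp)
  finally have "N0 \<le> N" using N1 by linarith
  have "A \<inter> {0..N} \<subseteq> {..<2 ^ e}"
  proof
    fix m assume "m \<in> A \<inter> {0..N}"
    then have "seed m \<noteq> 0" "m < 2 ^ stage_start (Suc s)" using assms N1 by auto
    then show "m \<in> {..<2 ^ e}" using seed_support_before_next_stage by (simp add: e_def)
  qed
  then have "card (A \<inter> {0..N}) \<le> card {..<(2::nat) ^ e}" by (intro card_mono) auto
  then have card: "real (card (A \<inter> {0..N})) \<le> 2 ^ e" by simp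
  have "(2::nat) ^ e * 2 ^ (s + 2) \<le> 2 ^ stage_start (Suc s)"
    unfolding power_add[symmetric] e_def using stage_start_Suc_ge[of s] by (intro power_increasing) auto
  then have "real ((2::nat) ^ e * 2 ^ (s + 2)) \<le> real ((2::nat) ^ stage_start (Suc s))"
    by (simp only: of_nat_le_iff)
  then have gap: "(2::real) ^ e * 2 ^ (s + 2) \<le> 2 ^ stage_start (Suc s)"
    by (simp only: of_nat_mult of_nat_power of_nat_numeral)
  have "real (card (A \<inter> {0..N})) / real (N + 1) \<le> 2 ^ e / 2 ^ stage_start (Suc s)"
    unfolding N1 using card by (simp add: divide_right_mono)
  also have "\<dots> \<le> 2 ^ e / (2 ^ e * 2 ^ (s + 2))" using gap by (intro divide_left_mono) auto
  also have "\<dots> = 1 / 2 ^ (s + 2)" by simp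
  also have "\<dots> \<le> (1/2) ^ n0"
    using power_decreasing[of n0 "s + 2" "1/2::real"] by (simp add: s_def power_one_over)
  finally show "\<exists>N\<ge>N0. real (card (A \<inter> {0..N})) / real (N + 1) < \<epsilon>"
    using n0 \<open>N0 \<le> N\<close> by (intro exI[of _ N]) auto
qed

lemma class_multiple_not_freq_hypercyclic:
  assumes "z \<in> class_multiples"
  shows "\<not> freq_hypercyclic_lp p (bws \<mu>) z"
proof
  assume fhc: "freq_hypercyclic_lp p (bws \<mu>) z"
  obtain c where z: "\<And>m. z m = c (class_of m) * seed m"
    using assms by (auto simp: class_multiples_def)
  define U :: "(nat \<Rightarrow> 'a) set" where "U = {y \<in> lp p. norm (y 0 - 1) < 1}"
  have "(\<lambda>n. if n = 0 then 1 else 0) \<in> U"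
    unfolding U_def using lp_eventually_zero[of 1 "\<lambda>n. if n = 0 then (1::'a) else 0"] p_pos by simp
  then have "U \<noteq> {}" by blast
  moreover have "lp_open p U" unfolding U_def by (rule lp_open_coord_ball[OF p_pos])
  ultimately have "lower_density (visits (bws \<mu>) z U) > 0"
    using fhc unfolding freq_hypercyclic_lp_def by blast
  moreover have "visits (bws \<mu>) z U \<subseteq> {m. seed m \<noteq> 0}"
  proof
    fix n assume "n \<in> visits (bws \<mu>) z U"
    then have "(bws \<mu> ^^ n) z 0 \<noteq> 0" by (auto simp: visits_def U_def)
    then show "n \<in> {m. seed m \<noteq> 0}" by (auto simp: bws_iterate z)
  qed
  ultimately show False using lower_density_seed_support[of "visits (bws \<mu>) z U"] by simp
qed

lemma scaled_pattern_approx: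
  assumes "C \<noteq> 0" "x0 \<in> lp p" "e > 0"
  obtains j where "lp_sum p (\<lambda>k. C * pattern j k - x0 k) < e"
proof -
  have "norm C powr p > 0" using assms(1) by simp
  then obtain y where "y \<in> finite_patterns D" and y: "lp_sum p (\<lambda>k. y k - inverse C * x0 k) < e / norm C powr p"
    using finite_patterns_dense[OF zero_in_D dense_D lp_scale[OF assms(2)] p_pos, of "e / norm C powr p"]
      assms(3) by auto
  have "y \<in> lp p" using pattern_length_zero[OF \<open>y \<in> finite_patterns D\<close>] p_pos
    by (intro lp_eventually_zero) auto
  have "(\<lambda>k. C * y k - x0 k) = (\<lambda>k. C * (y k - inverse C * x0 k))"
    using assms(1) by (simp add: fun_eq_iff algebra_simps)
  then have "lp_sum p (\<lambda>k. C * y k - x0 k) < e"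
    using y \<open>norm C powr p > 0\<close> lp_sum_scale[OF lp_diff[OF \<open>y \<in> lp p\<close> lp_scale[OF assms(2)]], of C]
      p_pos by (simp add: pos_less_divide_eq mult.commute)
  moreover obtain j where "pattern j = y" using pattern_surj[OF \<open>y \<in> finite_patterns D\<close>] by blast
  ultimately show thesis using that by blast
qed

lemma stage_error_small:
  assumes "e > 0"
  obtains t where "\<And>s k q. stage_code s = (k, j, t, q) \<Longrightarrow>
    real (stage_supp s) * (norm C * stage_bound s * stage_eps s) powr p + norm C powr p * stage_eps s < e"
proof -
  define y where "y = pattern j"
  define B where "B = real (pattern_length y + 1) * (norm C * pattern_bound y) powr p + norm C powr p + 1"
  have "B > 0" unfolding B_def by (simp add: add_nonneg_pos)
  then obtain t where t: "1 / real (t + 1) < e / B"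
    using reals_Archimedean[of "e / B"] assms by (auto simp: inverse_eq_divide)
  have "real (stage_supp s) * (norm C * stage_bound s * stage_eps s) powr p + norm C powr p * stage_eps s < e"
    if "stage_code s = (k, j, t, q)" for s k q
  proof -
    have s: "stage_supp s = pattern_length y + 1" "stage_bound s = pattern_bound y"
      "stage_eps s = 1 / real (t + 1)"
      using that by (simp_all add: stage_supp_def stage_bound_def stage_pattern_def stage_eps_def y_def)
    have "(norm C * stage_bound s * stage_eps s) powr p = (norm C * stage_bound s) powr p * stage_eps s powr p"
      using stage_bound_ge_1[of s] stage_eps_pos[of s] by (simp add: powr_mult)
    also have "\<dots> \<le> (norm C * stage_bound s) powr p * stage_eps s"
      using stage_eps_pos[of s] stage_eps_le_1[of s] by (intro mult_left_mono powr_le_self p_ge_1) auto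
    finally have "real (stage_supp s) * (norm C * stage_bound s * stage_eps s) powr p
        \<le> real (stage_supp s) * ((norm C * stage_bound s) powr p * stage_eps s)"
      by (intro mult_left_mono) auto
    then have "real (stage_supp s) * (norm C * stage_bound s * stage_eps s) powr p + norm C powr p * stage_eps s
        \<le> (real (stage_supp s) * (norm C * stage_bound s) powr p + norm C powr p) * stage_eps s"
      by (simp add: algebra_simps)
    also have "\<dots> \<le> B * stage_eps s"
      unfolding B_def s using stage_eps_pos[of s] by (intro mult_right_mono) (auto simp: s)
    also have "\<dots> < B * (e / B)" using t \<open>B > 0\<close> unfolding s by (rule mult_strict_left_mono)
    also have "\<dots> = e" using \<open>B > 0\<close> by simp
    finally show ?thesis .
  qed
  then show thesis by (rule that)
qed

lemma copy_start_visits: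
  assumes "z \<in> lp p" and z: "\<And>m. z m = c (class_of m) * seed m"
    and copy: "copy_start s r n" and serves: "region_serves s r \<mu>"
    and "x0 \<in> lp p" and ball: "\<And>y. y \<in> lp p \<Longrightarrow> lp_sum p (\<lambda>k. y k - x0 k) < 2 powr p * (3 * e) \<Longrightarrow> y \<in> U"
    and target: "lp_sum p (\<lambda>k. c (stage_class s) * stage_pattern s k - x0 k) < e"
    and error: "real (stage_supp s) * (norm (c (stage_class s)) * stage_bound s * stage_eps s) powr p
      + norm (c (stage_class s)) powr p * stage_eps s < e"
    and tail: "(2 powr \<mu>) powr p * (\<Sum>i. norm (z (i + 2 * n)) powr p) < e"
  shows "n \<in> visits (bws \<mu>) z U"
proof -
  define C where "C = c (stage_class s)"
  define w where "w = (bws \<mu> ^^ n) z"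
  have "\<mu> \<ge> 0" using serves sweep_mu_nonneg[of s "stage_start s" r] by (simp add: region_serves_def)
  have "w \<in> lp p" unfolding w_def by (rule bws_iterate_lp[OF \<open>\<mu> \<ge> 0\<close> assms(1) p_pos])
  have "(\<lambda>k. C * stage_pattern s k) \<in> lp p"
    using stage_pattern_zero p_pos by (intro lp_eventually_zero[of "stage_supp s"]) auto
  have "lp_sum p (\<lambda>k. w k - C * stage_pattern s k) < 2 * e"
    using lp_sum_orbit_minus_pattern_le[OF assms(1) z copy serves] error tail
    by (simp add: w_def C_def)
  moreover have "lp_sum p (\<lambda>k. w k - x0 k)
      \<le> 2 powr p * (lp_sum p (\<lambda>k. w k - C * stage_pattern s k) + lp_sum p (\<lambda>k. C * stage_pattern s k - x0 k))"
    using lp_sum_add_le[OF lp_diff[OF \<open>w \<in> lp p\<close> \<open>(\<lambda>k. C * stage_pattern s k) \<in> lp p\<close>]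
        lp_diff[OF \<open>(\<lambda>k. C * stage_pattern s k) \<in> lp p\<close> \<open>x0 \<in> lp p\<close>]] p_pos
    by simp
  moreover have "2 powr p * (lp_sum p (\<lambda>k. w k - C * stage_pattern s k) + lp_sum p (\<lambda>k. C * stage_pattern s k - x0 k))
      < 2 powr p * (3 * e)"
    using calculation(1) target by (intro mult_strict_left_mono) (auto simp: C_def)
  ultimately have "lp_sum p (\<lambda>k. w k - x0 k) < 2 powr p * (3 * e)" by linarith
  then show ?thesis using ball[OF \<open>w \<in> lp p\<close>] by (simp add: visits_def w_def)
qed

text \<open>Every parameter \<open>\<mu>\<close> is served by some region of every stage with the right \<open>q\<close>, and the
  copy starts of a region form a progression of step \<open>L\<close> from \<open>b\<close> to \<open>2b\<close>.\<close>

lemma upper_density_copy_starts_pos: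
  assumes q: "1 + 1 / real (q + 2) \<le> \<mu>" "\<mu> \<le> real (q + 2)"
    and copies: "\<And>s r n. stage_code s = (k, j, t, q) \<Longrightarrow> N1 \<le> n \<Longrightarrow> copy_start s r n \<Longrightarrow>
      region_serves s r \<mu> \<Longrightarrow> n \<in> A"
  shows "upper_density A > 0"
proof -
  obtain s0 where "stage_code s0 = (k, j, t, q)" using stage_code_frequently by blast
  define L where "L = stage_period s0"
  have "L \<ge> 1" using stage_period_pos[of s0] by (simp add: L_def)
  have "ereal (1 / (6 * real L)) \<le> upper_density A"
  proof (rule upper_density_progressions_ge[OF \<open>L \<ge> 1\<close>])
    fix N
    obtain s where "max N N1 \<le> s" and s: "stage_code s = (k, j, t, q)"
      using stage_code_frequently by blast
    have "stage_period s = L"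
      unfolding L_def using s \<open>stage_code s0 = (k, j, t, q)\<close> by (intro stage_period_eq) simp
    have "1 + stage_delta s \<le> \<mu>" "\<mu> \<le> real (stage_top s)"
      using q s by (simp_all add: stage_delta_def stage_top_def)
    then obtain r where "r < stage_regions s" "region_serves s r \<mu>"
      using sweep_covers by (metis region_serves_def)
    define b where "b = region_start s r"
    have "s \<le> stage_start s + r" using stage_start_ge[of s] by simp
    also have "\<dots> < b" unfolding b_def region_start_def by (rule less_exp)
    finally have "s \<le> b" by simp
    have "b + i * L \<in> A" if "i < b div L" for i
    proof (rule copies[OF s _ _ \<open>region_serves s r \<mu>\<close>])
      show "N1 \<le> b + i * L" using \<open>max N N1 \<le> s\<close> \<open>s \<le> b\<close> by simp
      have "(i + 1) * L \<le> b div L * L" using that by (intro mult_right_mono) auto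
      also have "\<dots> \<le> b" by simp
      finally show "copy_start s r (b + i * L)"
        using \<open>r < stage_regions s\<close> \<open>stage_period s = L\<close> by (auto simp: copy_start_def b_def algebra_simps)
    qed
    then show "\<exists>b\<ge>N. 8 * L \<le> b \<and> (\<forall>i<b div L. b + i * L \<in> A)"
      using \<open>max N N1 \<le> s\<close> \<open>s \<le> b\<close> region_start_ge[of s r] \<open>stage_period s = L\<close>
      by (intro exI[of _ b]) (auto simp: b_def)
  qed
  moreover have "0 < ereal (1 / (6 * real L))" using \<open>L \<ge> 1\<close> by simp
  ultimately show ?thesis by (rule order_less_le_trans[rotated])
qed

lemma class_multiple_U_freq_hypercyclic:
  assumes "z \<in> class_multiples" "z \<noteq> (\<lambda>n. 0)" "\<mu> > 1"
  shows "U_freq_hypercyclic_lp p (bws \<mu>) z"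
  unfolding U_freq_hypercyclic_lp_def
proof (intro conjI allI impI)
  obtain c where "z \<in> lp p" and z: "\<And>m. z m = c (class_of m) * seed m"
    using assms(1) by (auto simp: class_multiples_def)
  show "z \<in> lp p" by fact
  fix U :: "(nat \<Rightarrow> 'a) set"
  assume U: "lp_open p U \<and> U \<noteq> {}"
  then obtain x0 where "x0 \<in> U" by blast
  then have "x0 \<in> lp p" using U by (auto simp: lp_open_def)
  obtain e0 where "e0 > 0" and ball0: "\<And>y. y \<in> lp p \<Longrightarrow> lp_sum p (\<lambda>k. y k - x0 k) < e0 \<Longrightarrow> y \<in> U"
    using lp_open_lp_sum_ball[of p U x0] U \<open>x0 \<in> U\<close> p_pos by blast
  define e where "e = e0 / (2 powr p * 3)"
  have "e > 0" using \<open>e0 > 0\<close> by (simp add: e_def)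
  have ball: "y \<in> U" if "y \<in> lp p" "lp_sum p (\<lambda>k. y k - x0 k) < 2 powr p * (3 * e)" for y
    using ball0 that by (simp add: e_def)
  obtain m0 where "z m0 \<noteq> 0" using assms(2) by auto
  define k0 where "k0 = class_of m0"
  have "c k0 \<noteq> 0" using \<open>z m0 \<noteq> 0\<close> z by (auto simp: k0_def)
  obtain j where target: "lp_sum p (\<lambda>k. c k0 * pattern j k - x0 k) < e"
    using scaled_pattern_approx[OF \<open>c k0 \<noteq> 0\<close> \<open>x0 \<in> lp p\<close> \<open>e > 0\<close>] by blast
  obtain q where q: "1 + 1 / real (q + 2) \<le> \<mu>" "\<mu> \<le> real (q + 2)"
    using weight_bracket[OF assms(3)] by blast
  obtain t where error: "\<And>s k q. stage_code s = (k, j, t, q) \<Longrightarrow> real (stage_supp s) *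
      (norm (c k0) * stage_bound s * stage_eps s) powr p + norm (c k0) powr p * stage_eps s < e"
    using stage_error_small[OF \<open>e > 0\<close>] by blast
  obtain N1 where tail: "\<And>n. N1 \<le> n \<Longrightarrow> (2 powr \<mu>) powr p * (\<Sum>i. norm (z (i + n)) powr p) < e"
    using lp_tail_small[OF \<open>z \<in> lp p\<close> \<open>e > 0\<close>, of "(2 powr \<mu>) powr p"] by auto
  show "upper_density (visits (bws \<mu>) z U) > 0"
  proof (rule upper_density_copy_starts_pos[OF q])
    fix s r n
    assume s: "stage_code s = (k0, j, t, q)" and "N1 \<le> n" "copy_start s r n" "region_serves s r \<mu>"
    then have "stage_class s = k0" "stage_pattern s = pattern j"
      by (simp_all add: stage_class_def stage_pattern_def)
    with target error[OF s] tail[of "2 * n"] \<open>N1 \<le> n\<close>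
    show "n \<in> visits (bws \<mu>) z U"
      by (intro copy_start_visits[OF \<open>z \<in> lp p\<close> z \<open>copy_start s r n\<close> \<open>region_serves s r \<mu>\<close>
          \<open>x0 \<in> lp p\<close> ball]) simp_all
  qed
qed

end

theorem theorem1p3:
  fixes p :: real
  assumes "1 \<le> p"
  shows "\<exists>M :: (nat \<Rightarrow> 'a::{real_normed_field, banach}) set.
     M \<subseteq> lp p \<and> seq_subspace M \<and> lp_closed p M \<and> infinite_dim M \<and>
     (\<forall>x\<in>M. x \<noteq> (\<lambda>n. 0) \<longrightarrow> (\<forall>\<mu>::real. \<mu> > 1 \<longrightarrow> U_freq_hypercyclic_lp p (bws \<mu>) x)) \<and>
     (\<forall>x\<in>M. \<forall>\<mu>::real. \<mu> > 1 \<longrightarrow> \<not> freq_hypercyclic_lp p (bws \<mu>) x)"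
proof -
  obtain D :: "'a set"
    where "countable D" "0 \<in> D" "1 \<in> D" "\<And>a e. e > 0 \<Longrightarrow> \<exists>d\<in>D. norm (a - d) < e"
    by (rule real_normed_field_separable) blast
  then interpret sweep_construction p D
    using assms by unfold_locales auto
  show ?thesis
    using class_multiples_subspace class_multiples_closed class_multiples_infinite_dim
      class_multiple_U_freq_hypercyclic class_multiple_not_freq_hypercyclic
    by (intro exI[of _ class_multiples]) (auto simp: class_multiples_def)
qed

end
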